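(* Let $\mathcal{A}$ and $\mathcal{B}$ be $C^*$-algebras with regular monotone completions $\overline{\mathcal{A}}$ and $\overline{\mathcal{B}}$, and suppose $\Phi:\mathcal{A}^{sa}\to\mathcal{B}^{sa}$ is an order isomorphism. Then there exists a unique order isomorphism $\overline{\Phi}:\overline{\mathcal{A}}^{sa}\to\overline{\mathcal{B}}^{sa}$ extending $\Phi$.
   Context: All $C^*$-algebras are unital; $\mathcal{A}^{sa}$ is the self-adjoint part with order $a\le b\iff b-a$ positive. An order isomorphism is a bijection preserving order in both directions. A $C^*$-algebra is monotone complete if every bounded increasing net of self-adjoint elements has a supremum in the self-adjoint part. A regular monotone completion of $\mathcal{A}$ is a monotone complete $C^*$-algebra $\overline{\mathcal{A}}$ containing $\mathcal{A}$ as a unital $C^*$-subalgebra (via a unital $^*$-monomorphism) such that $\overline{\mathcal{A}}^{sa}$ is the monotone closure of $\mathcal{A}^{sa}$ in $\overline{\mathcal{A}}^{sa}$ (the smallest subset containing $\mathcal{A}^{sa}$ and closed under suprema/infima, taken in $\overline{\mathcal{A}}^{sa}$, of bounded increasing/decreasing nets), every $b\in\overline{\mathcal{A}}^{sa}$ is the supremum in $\overline{\mathcal{A}}^{sa}$ of $\{a\in\mathcal{A}^{sa}:a\le b\}$, and suprema existing in $\mathcal{A}^{sa}$ remain suprema in $\overline{\mathcal{A}}^{sa}$. Such a completion exists and is unique up to a $^*$-isomorphism fixing $\mathcal{A}$ (Hamana). *)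

theory Defs
  imports Complex_Main
begin

class cstar_algebra = real_normed_algebra_1 + banach +
  fixes scaleC :: "complex \<Rightarrow> 'a \<Rightarrow> 'a"
    and adj :: "'a \<Rightarrow> 'a"
  assumes scaleC_add_right: "scaleC c (x + y) = scaleC c x + scaleC c y"
    and scaleC_add_left: "scaleC (c + d) x = scaleC c x + scaleC d x"
    and scaleC_scaleC: "scaleC c (scaleC d x) = scaleC (c * d) x"
    and scaleC_one: "scaleC 1 x = x"
    and scaleC_of_real: "scaleC (complex_of_real r) x = scaleR r x"
    and scaleC_mult_left: "scaleC c (x * y) = scaleC c x * y"
    and scaleC_mult_right: "scaleC c (x * y) = x * scaleC c y"
    and norm_scaleC: "norm (scaleC c x) = cmod c * norm x"
    and adj_adj: "adj (adj x) = x"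
    and adj_add: "adj (x + y) = adj x + adj y"
    and adj_scaleC: "adj (scaleC c x) = scaleC (cnj c) (adj x)"
    and adj_mult: "adj (x * y) = adj y * adj x"
    and cstar_identity: "norm (adj x * x) = norm x ^ 2"

definition sa :: "'a::cstar_algebra set" where
  "sa = {x. adj x = x}"

definition cinvertible :: "'a::cstar_algebra \<Rightarrow> bool" where
  "cinvertible x \<longleftrightarrow> (\<exists>y. x * y = 1 \<and> y * x = 1)"

definition cspectrum :: "'a::cstar_algebra \<Rightarrow> complex set" where
  "cspectrum x = {c. \<not> cinvertible (x - scaleC c 1)}"

definition cpositive :: "'a::cstar_algebra \<Rightarrow> bool" where
  "cpositive x \<longleftrightarrow> x \<in> sa \<and> cspectrum x \<subseteq> {z. z \<in> \<real> \<and> 0 \<le> Re z}"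

definition sa_le :: "'a::cstar_algebra \<Rightarrow> 'a \<Rightarrow> bool" where
  "sa_le a b \<longleftrightarrow> cpositive (b - a)"

definition is_sup_sa :: "'a::cstar_algebra set \<Rightarrow> 'a \<Rightarrow> bool" where
  "is_sup_sa S s \<longleftrightarrow> s \<in> sa \<and> (\<forall>x\<in>S. sa_le x s) \<and>
     (\<forall>u\<in>sa. (\<forall>x\<in>S. sa_le x u) \<longrightarrow> sa_le s u)"

definition is_inf_sa :: "'a::cstar_algebra set \<Rightarrow> 'a \<Rightarrow> bool" where
  "is_inf_sa S s \<longleftrightarrow> s \<in> sa \<and> (\<forall>x\<in>S. sa_le s x) \<and>
     (\<forall>u\<in>sa. (\<forall>x\<in>S. sa_le u x) \<longrightarrow> sa_le u s)"

text \<open>Ranges of bounded increasing (decreasing) nets of self-adjoint elements are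
  exactly the nonempty upward (downward) directed bounded subsets of the
  self-adjoint part; the supremum of a net is the supremum of its range.\<close>
definition up_directed_bdd :: "'a::cstar_algebra set \<Rightarrow> bool" where
  "up_directed_bdd D \<longleftrightarrow> D \<subseteq> sa \<and> D \<noteq> {} \<and>
     (\<forall>x\<in>D. \<forall>y\<in>D. \<exists>z\<in>D. sa_le x z \<and> sa_le y z) \<and>
     (\<exists>u\<in>sa. \<forall>x\<in>D. sa_le x u)"

definition down_directed_bdd :: "'a::cstar_algebra set \<Rightarrow> bool" where
  "down_directed_bdd D \<longleftrightarrow> D \<subseteq> sa \<and> D \<noteq> {} \<and>
     (\<forall>x\<in>D. \<forall>y\<in>D. \<exists>z\<in>D. sa_le z x \<and> sa_le z y) \<and>
     (\<exists>u\<in>sa. \<forall>x\<in>D. sa_le u x)"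

definition monotone_complete :: "'a::cstar_algebra itself \<Rightarrow> bool" where
  "monotone_complete _ \<longleftrightarrow>
     (\<forall>D::'a set. up_directed_bdd D \<longrightarrow> (\<exists>s. is_sup_sa D s))"

definition unital_star_mono :: "('a::cstar_algebra \<Rightarrow> 'b::cstar_algebra) \<Rightarrow> bool" where
  "unital_star_mono i \<longleftrightarrow> inj i \<and> i 1 = 1 \<and>
     (\<forall>x y. i (x + y) = i x + i y) \<and> (\<forall>x y. i (x * y) = i x * i y) \<and>
     (\<forall>c x. i (scaleC c x) = scaleC c (i x)) \<and> (\<forall>x. i (adj x) = adj (i x))"

definition monotone_closed :: "'b::cstar_algebra set \<Rightarrow> bool" where
  "monotone_closed S \<longleftrightarrow> S \<subseteq> sa \<and>
     (\<forall>D\<subseteq>S. \<forall>s. up_directed_bdd D \<and> is_sup_sa D s \<longrightarrow> s \<in> S) \<and>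
     (\<forall>D\<subseteq>S. \<forall>s. down_directed_bdd D \<and> is_inf_sa D s \<longrightarrow> s \<in> S)"

definition monotone_closure :: "'b::cstar_algebra set \<Rightarrow> 'b set" where
  "monotone_closure X = \<Inter>{S. X \<subseteq> S \<and> monotone_closed S}"

definition regular_monotone_completion ::
    "('a::cstar_algebra \<Rightarrow> 'b::cstar_algebra) \<Rightarrow> bool" where
  "regular_monotone_completion i \<longleftrightarrow>
     unital_star_mono i \<and> monotone_complete TYPE('b) \<and>
     monotone_closure (i ` sa) = (sa :: 'b set) \<and>
     (\<forall>b\<in>(sa :: 'b set). is_sup_sa {i a | a. a \<in> sa \<and> sa_le (i a) b} b) \<and>
     (\<forall>S s. S \<subseteq> (sa :: 'a set) \<and> is_sup_sa S s \<longrightarrow> is_sup_sa (i ` S) (i s))"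

definition order_iso_sa ::
    "('a::cstar_algebra \<Rightarrow> 'b::cstar_algebra) \<Rightarrow> bool" where
  "order_iso_sa f \<longleftrightarrow> bij_betw f (sa :: 'a set) (sa :: 'b set) \<and>
     (\<forall>x\<in>(sa :: 'a set). \<forall>y\<in>sa. sa_le x y \<longleftrightarrow> sa_le (f x) (f y))"

end

theory Submission
  imports Defs "HOL-Analysis.Analysis" "HOL-Computational_Algebra.Fundamental_Theorem_Algebra"
begin

text \<open>An injective unital \<open>*\<close>-homomorphism preserves the spectrum of
  self-adjoint elements, so the embeddings of A and B into their completions are
  order embeddings. This is where the analysis lies: the norm of a self-adjoint element is
  its spectral radius (the resolvent is averaged over roots of unity), and a tent function,
  approximated by polynomials via Stone-Weierstrass, separates a point of the spectrum of
  \<open>x\<close> from the spectrum of its image.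

  By regularity an element \<open>q\<close> of the completion of A is determined by the
  embedded elements below it, so \<open>q\<close> must be sent to the \<open>q'\<close> whose embedded elements
  below it are exactly the \<open>\<Phi>\<close>-images of those below \<open>q\<close>. The elements \<open>q\<close> for
  which such a \<open>q'\<close> exists contain the embedded ones and are closed under suprema and
  infima of bounded directed sets, hence they form the whole completion. Applying the
  construction to the inverse of \<open>\<Phi>\<close> gives surjectivity, and any extending order
  isomorphism must respect these sets of lower bounds, which gives uniqueness.\<close>

interpretation scaleC: vector_space "scaleC :: complex \<Rightarrow> 'a \<Rightarrow> 'a::cstar_algebra"
  by unfold_locales (simp_all add: scaleC_add_right scaleC_add_left scaleC_scaleC scaleC_one)

lemma scaleC_one_mult: "scaleC c 1 * x = scaleC c (x::'a::cstar_algebra)"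
  by (metis scaleC_mult_left mult_1_left)

lemma mult_scaleC_one: "x * scaleC c 1 = scaleC c (x::'a::cstar_algebra)"
  by (metis scaleC_mult_right mult_1_right)

lemma scaleC_power: "scaleC c y ^ m = scaleC (c ^ m) (y ^ m :: 'a::cstar_algebra)"
  by (induct m)
    (simp_all add: scaleC_mult_left[symmetric] scaleC_mult_right[symmetric] scaleC_scaleC)

lemma bounded_linear_scaleC_left: "bounded_linear (\<lambda>\<mu>. scaleC \<mu> (y::'a::cstar_algebra))"
proof (rule bounded_linear_intro)
  show "scaleC (\<mu> + \<nu>) y = scaleC \<mu> y + scaleC \<nu> y" for \<mu> \<nu> by (rule scaleC_add_left)
  show "scaleC (scaleR r \<mu>) y = scaleR r (scaleC \<mu> y)" for r \<mu>
    by (metis scaleR_conv_of_real scaleC_scaleC scaleC_of_real)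
  show "norm (scaleC \<mu> y) \<le> norm \<mu> * norm y" for \<mu> by (simp add: norm_scaleC)
qed

lemma adj_one [simp]: "adj (1::'a::cstar_algebra) = 1"
proof -
  have "adj 1 * y = y" for y :: 'a
    using adj_mult[of "adj y" 1] by (simp add: adj_adj)
  from this[of 1] show ?thesis by simp
qed

lemma adj_zero [simp]: "adj (0::'a::cstar_algebra) = 0"
  using adj_add[of "0::'a" 0] by simp

lemma adj_minus: "adj (- x) = - adj (x::'a::cstar_algebra)"
proof -
  have "adj x + adj (- x) = 0" using adj_add[of x "- x"] by simp
  then show ?thesis by (simp add: eq_neg_iff_add_eq_0 add.commute)
qed

lemma adj_diff: "adj (x - y) = adj x - adj (y::'a::cstar_algebra)"
  by (simp only: diff_conv_add_uminus adj_add adj_minus)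

lemma adj_scaleR: "adj (scaleR r x) = scaleR r (adj (x::'a::cstar_algebra))"
  by (simp add: scaleC_of_real[symmetric] adj_scaleC)

lemma adj_sum: "adj (sum f A) = (\<Sum>i\<in>A. adj (f i::'a::cstar_algebra))"
  by (induct A rule: infinite_finite_induct) (auto simp: adj_add)

lemma adj_power: "adj (x ^ n) = adj (x::'a::cstar_algebra) ^ n"
  by (induct n) (auto simp: adj_mult power_commutes)

lemma norm_adj: "norm (adj x) = norm (x::'a::cstar_algebra)"
proof -
  have le: "norm y \<le> norm (adj y)" for y :: 'a
  proof (cases "y = 0")
    case False
    have "norm y ^ 2 = norm (adj y * y)" by (simp add: cstar_identity)
    also have "\<dots> \<le> norm (adj y) * norm y" by (rule norm_mult_ineq)
    finally show ?thesis using False by (simp add: power2_eq_square)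
  qed simp
  show ?thesis using le[of x] le[of "adj x"] by (simp add: adj_adj)
qed

lemma sa_iff: "x \<in> sa \<longleftrightarrow> adj x = x" by (simp add: sa_def)
lemma sa_add: "x \<in> sa \<Longrightarrow> y \<in> sa \<Longrightarrow> x + y \<in> sa" by (simp add: sa_def adj_add)
lemma sa_diff: "x \<in> sa \<Longrightarrow> y \<in> sa \<Longrightarrow> x - y \<in> sa" by (simp add: sa_def adj_diff)
lemma sa_minus: "x \<in> sa \<Longrightarrow> - x \<in> sa" by (simp add: sa_def adj_minus)
lemma sa_scaleR: "x \<in> sa \<Longrightarrow> scaleR r x \<in> sa" by (simp add: sa_def adj_scaleR)
lemma sa_one: "1 \<in> sa" by (simp add: sa_def)
lemma sa_zero: "0 \<in> sa" by (simp add: sa_def)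
lemma sa_power: "x \<in> sa \<Longrightarrow> x ^ n \<in> sa" by (simp add: sa_def adj_power)

lemma norm_mult_self_sa: "x \<in> sa \<Longrightarrow> norm (x * x) = norm x ^ 2"
  by (metis cstar_identity sa_iff)

lemma norm_power_two_power_sa: "x \<in> sa \<Longrightarrow> norm (x ^ (2 ^ m)) = norm x ^ (2 ^ m)"
proof (induct m)
  case (Suc m)
  have "x ^ (2 ^ Suc m) = x ^ (2 ^ m) * x ^ (2 ^ m)"
    by (simp add: power_add[symmetric] mult_2)
  then have "norm (x ^ (2 ^ Suc m)) = norm (x ^ (2 ^ m)) ^ 2"
    using norm_mult_self_sa[OF sa_power[OF Suc.prems]] by simp
  then show ?case using Suc by (simp add: power_mult[symmetric] mult.commute)
qed simp

lemma sa_closed_limit: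
  fixes u :: "nat \<Rightarrow> 'a::cstar_algebra"
  assumes u: "\<And>n. u n \<in> sa" and L: "u \<longlonglongrightarrow> L"
  shows "L \<in> sa"
proof -
  have "(\<lambda>n. adj (u n)) \<longlonglongrightarrow> adj L"
  proof (rule Lim_null_comparison[where g = "\<lambda>n. norm (u n - L)", THEN LIM_zero_cancel])
    show "\<forall>\<^sub>F n in sequentially. norm (adj (u n) - adj L) \<le> norm (u n - L)"
      by (simp add: adj_diff[symmetric] norm_adj)
    show "(\<lambda>n. norm (u n - L)) \<longlonglongrightarrow> 0" using L by (simp add: tendsto_norm_zero_iff LIM_zero_iff)
  qed
  then have "u \<longlonglongrightarrow> adj L" using u by (simp add: sa_iff)
  then show ?thesis using L LIMSEQ_unique by (auto simp: sa_iff)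
qed

section \<open>Invertible elements\<close>

lemma cinvertibleI: "x * y = 1 \<Longrightarrow> y * x = 1 \<Longrightarrow> cinvertible x"
  unfolding cinvertible_def by blast

lemma cinvertible_mult: "cinvertible x \<Longrightarrow> cinvertible y \<Longrightarrow> cinvertible (x * y)"
  unfolding cinvertible_def
proof (elim exE conjE)
  fix x' y' assume inv: "x * x' = 1" "x' * x = 1" "y * y' = 1" "y' * y = 1"
  have "(x * y) * (y' * x') = x * (y * y') * x'" "(y' * x') * (x * y) = y' * (x' * x) * y"
    by (simp_all only: mult.assoc)
  then have "(x * y) * (y' * x') = 1" "(y' * x') * (x * y) = 1" using inv by simp_all
  then show "\<exists>z. x * y * z = 1 \<and> z * (x * y) = 1" by blast
qed

lemma cinvertible_scaleC_one: "c \<noteq> 0 \<Longrightarrow> cinvertible (scaleC c (1::'a::cstar_algebra))"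
  by (rule cinvertibleI[of _ "scaleC (inverse c) 1"]) (simp_all add: scaleC_one_mult scaleC_scaleC)

lemma cinvertible_scaleC: "c \<noteq> 0 \<Longrightarrow> cinvertible (x::'a::cstar_algebra) \<Longrightarrow> cinvertible (scaleC c x)"
  using cinvertible_mult[OF cinvertible_scaleC_one] by (simp add: scaleC_one_mult)

lemma cinvertible_minus: "cinvertible (- x) \<longleftrightarrow> cinvertible x"
proof -
  have "cinvertible (- y)" if "cinvertible y" for y :: 'a
    using that unfolding cinvertible_def by (metis minus_mult_minus)
  then show ?thesis by (metis minus_minus)
qed

lemma cinvertible_commuting_factor:
  assumes "x * y = y * x" "cinvertible (x * y)"
  shows "cinvertible x"
proof -
  obtain z where z: "x * y * z = 1" "z * (x * y) = 1" using assms(2) cinvertible_def by blast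
  have right: "x * (y * z) = 1" using z(1) by (simp add: mult.assoc)
  have "(z * y) * x = z * (x * y)" using assms(1) by (simp add: mult.assoc)
  then have left: "(z * y) * x = 1" using z(2) by simp
  have "z * y = (z * y) * (x * (y * z))" using right by simp
  also have "\<dots> = ((z * y) * x) * (y * z)" by (simp only: mult.assoc)
  also have "\<dots> = y * z" using left by simp
  finally have "(y * z) * x = 1" using left by simp
  then show ?thesis by (rule cinvertibleI[OF right])
qed

definition cinv :: "'a::cstar_algebra \<Rightarrow> 'a" where
  "cinv x = (SOME y. x * y = 1 \<and> y * x = 1)"

lemma cinv_inverse: "cinvertible x \<Longrightarrow> x * cinv x = 1 \<and> cinv x * x = 1"
  unfolding cinv_def cinvertible_def by (rule someI_ex)

lemma one_minus_mult_geometric_sum: "(1 - x) * (\<Sum>n<N. x ^ n) = 1 - (x::'a::ring_1) ^ N"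
proof (induct N)
  case (Suc N)
  have "(1 - x) * (\<Sum>n<Suc N. x ^ n) = (1 - x) * (\<Sum>n<N. x ^ n) + (1 - x) * x ^ N"
    by (simp add: distrib_left)
  also have "\<dots> = 1 - x ^ Suc N" using Suc by (simp add: left_diff_distrib)
  finally show ?case .
qed simp

lemma geometric_sum_mult_one_minus: "(\<Sum>n<N. x ^ n) * (1 - x) = 1 - (x::'a::ring_1) ^ N"
proof (induct N)
  case (Suc N)
  have "(\<Sum>n<Suc N. x ^ n) * (1 - x) = (\<Sum>n<N. x ^ n) * (1 - x) + x ^ N * (1 - x)"
    by (simp add: distrib_right)
  also have "\<dots> = 1 - x ^ Suc N" using Suc by (simp add: right_diff_distrib power_commutes)
  finally show ?case .
qed simp

lemma cinvertible_one_minus: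
  fixes x :: "'a::cstar_algebra"
  assumes "norm x < 1"
  shows "cinvertible (1 - x)"
proof -
  have "summable (\<lambda>n. x ^ n)"
    using assms by (intro summable_comparison_test'[OF summable_geometric norm_power_ineq]) simp
  then have sums: "(\<lambda>N. \<Sum>n<N. x ^ n) \<longlonglongrightarrow> suminf (\<lambda>n. x ^ n)"
    using summable_LIMSEQ by blast
  have "(\<lambda>N. x ^ N) \<longlonglongrightarrow> 0"
  proof (rule Lim_null_comparison)
    show "\<forall>\<^sub>F N in sequentially. norm (x ^ N) \<le> norm x ^ N" by (simp add: norm_power_ineq)
    show "(\<lambda>N. norm x ^ N) \<longlonglongrightarrow> 0" using assms by (simp add: LIMSEQ_power_zero)
  qed
  then have rem: "(\<lambda>N. 1 - x ^ N) \<longlonglongrightarrow> 1" using tendsto_diff[OF tendsto_const] by fastforce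
  have "(1 - x) * suminf (\<lambda>n. x ^ n) = 1"
    using tendsto_mult_left[OF sums, of "1 - x"] rem
    by (simp add: one_minus_mult_geometric_sum LIMSEQ_unique)
  moreover have "suminf (\<lambda>n. x ^ n) * (1 - x) = 1"
    using tendsto_mult_right[OF sums, of "1 - x"] rem
    by (simp add: geometric_sum_mult_one_minus LIMSEQ_unique)
  ultimately show ?thesis by (rule cinvertibleI)
qed

lemma open_cinvertible: "open {x::'a::cstar_algebra. cinvertible x}"
  unfolding open_dist
proof
  fix a :: 'a assume "a \<in> {x. cinvertible x}"
  then obtain w where w: "a * w = 1" "w * a = 1" using cinvertible_def by blast
  have pos: "norm w + 1 > 0" using norm_ge_zero[of w] by linarith
  have "cinvertible b" if "dist b a < 1 / (norm w + 1)" for b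
  proof -
    have "norm (w * (a - b)) \<le> norm w * norm (a - b)" by (rule norm_mult_ineq)
    also have "\<dots> \<le> norm w * (1 / (norm w + 1))"
      using that by (intro mult_left_mono) (simp_all add: dist_norm norm_minus_commute)
    also have "\<dots> < 1" using pos by simp
    finally have "cinvertible (a * (1 - w * (a - b)))"
      using \<open>a \<in> {x. cinvertible x}\<close> cinvertible_mult cinvertible_one_minus by blast
    moreover have "a * (1 - w * (a - b)) = b"
      by (simp add: right_diff_distrib mult.assoc[symmetric] w(1))
    ultimately show ?thesis by simp
  qed
  then show "\<exists>e>0. \<forall>b. dist b a < e \<longrightarrow> b \<in> {x. cinvertible x}"
    using pos by (intro exI[of _ "1 / (norm w + 1)"]) auto
qed

lemma norm_cinv_diff_le:
  fixes a b :: "'a::cstar_algebra"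
  assumes a: "cinvertible a" and b: "cinvertible b" and close: "norm (a - b) * norm (cinv a) \<le> 1/2"
  shows "norm (cinv b - cinv a) \<le> 2 * norm (cinv a) ^ 2 * norm (a - b)"
proof -
  define d where "d = norm (cinv b - cinv a)"
  define k where "k = norm (a - b) * norm (cinv a)"
  have k: "0 \<le> k" "k \<le> 1/2" using close by (simp_all add: k_def)
  have "cinv b - cinv a = cinv b * (a * cinv a) - (cinv b * b) * cinv a"
    using cinv_inverse[OF a] cinv_inverse[OF b] by simp
  also have "\<dots> = cinv b * (a - b) * cinv a" by (simp add: algebra_simps)
  finally have eq: "cinv b - cinv a = cinv b * (a - b) * cinv a" .
  have "d \<le> norm (cinv b * (a - b)) * norm (cinv a)"
    unfolding d_def eq by (rule norm_mult_ineq)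
  also have "\<dots> \<le> norm (cinv b) * norm (a - b) * norm (cinv a)"
    by (intro mult_right_mono norm_mult_ineq norm_ge_zero)
  also have "\<dots> = norm (cinv b) * k" by (simp add: k_def mult.assoc)
  also have "\<dots> \<le> (norm (cinv a) + d) * k"
    using k norm_triangle_ineq[of "cinv a" "cinv b - cinv a"] by (intro mult_right_mono) (simp_all add: d_def)
  finally have "d * (1 - k) \<le> norm (cinv a) * k" by (simp add: algebra_simps)
  moreover have "d * (1/2) \<le> d * (1 - k)" using k by (intro mult_left_mono) (simp_all add: d_def)
  ultimately have "d \<le> 2 * norm (cinv a) * k" by linarith
  then show ?thesis by (simp add: d_def k_def power2_eq_square mult_ac)
qed

lemma continuous_on_cinv: "continuous_on {x::'a::cstar_algebra. cinvertible x} cinv"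
  unfolding continuous_on_iff
proof (intro ballI allI impI)
  fix a :: 'a and e :: real
  assume a: "a \<in> {x. cinvertible x}" and e: "0 < e"
  define B where "B = norm (cinv a) + 1"
  have B: "B > 0" "norm (cinv a) \<le> B" unfolding B_def using norm_ge_zero[of "cinv a"] by linarith+
  define d where "d = min (1 / (2 * B)) (e / (2 * B ^ 2))"
  have "dist (cinv b) (cinv a) < e" if b: "b \<in> {x. cinvertible x}" and bd: "dist b a < d" for b
  proof -
    have close: "norm (a - b) < d" using bd by (simp add: dist_norm norm_minus_commute)
    have "norm (a - b) * norm (cinv a) \<le> (1 / (2 * B)) * B"
      using close B by (intro mult_mono) (simp_all add: d_def)
    then have "norm (cinv b - cinv a) \<le> 2 * norm (cinv a) ^ 2 * norm (a - b)"
      using B a b by (intro norm_cinv_diff_le) simp_all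
    also have "\<dots> \<le> 2 * B ^ 2 * norm (a - b)"
      using power_mono[OF B(2), of 2] by (simp add: mult_right_mono)
    also have "\<dots> < 2 * B ^ 2 * (e / (2 * B ^ 2))"
      using close B by (intro mult_strict_left_mono) (simp_all add: d_def)
    also have "\<dots> = e" using B by simp
    finally show ?thesis by (simp add: dist_norm)
  qed
  moreover have "d > 0" using B e by (simp add: d_def)
  ultimately show "\<exists>d>0. \<forall>b\<in>{x. cinvertible x}. dist b a < d \<longrightarrow> dist (cinv b) (cinv a) < e"
    by blast
qed

lemma continuous_on_resolvent:
  fixes y :: "'a::cstar_algebra"
  assumes "\<And>\<mu>. \<mu> \<in> S \<Longrightarrow> cinvertible (1 - scaleC \<mu> y)"
  shows "continuous_on S (\<lambda>\<mu>. cinv (1 - scaleC \<mu> y))"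
  using assms
  by (intro continuous_on_compose2[OF continuous_on_cinv]
      continuous_intros bounded_linear.continuous_on[OF bounded_linear_scaleC_left]) auto

lemma cspectrum_norm_le:
  fixes x :: "'a::cstar_algebra"
  assumes "c \<in> cspectrum x"
  shows "cmod c \<le> norm x"
proof (rule ccontr)
  assume "\<not> cmod c \<le> norm x"
  then have lt: "norm x < cmod c" by simp
  then have c: "c \<noteq> 0" by auto
  have "norm (scaleC (inverse c) x) = norm x / cmod c"
    by (simp add: norm_scaleC norm_inverse divide_inverse mult.commute)
  then have small: "norm (scaleC (inverse c) x) < 1" using lt c by simp
  have "scaleC (- c) (1 - scaleC (inverse c) x) = x - scaleC c 1"
    using c by (simp add: scaleC.scale_right_diff_distrib scaleC_scaleC)
  moreover have "cinvertible (scaleC (- c) (1 - scaleC (inverse c) x))"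
    using c small by (simp add: cinvertible_minus cinvertible_scaleC cinvertible_one_minus)
  ultimately show False using assms by (simp add: cspectrum_def)
qed

lemma closed_cspectrum: "closed (cspectrum (x::'a::cstar_algebra))"
proof -
  have "cspectrum x = (\<lambda>c. x - scaleC c 1) -` (- {y. cinvertible y})"
    by (auto simp: cspectrum_def)
  moreover have "continuous (at c) (\<lambda>c. x - scaleC c (1::'a))" for c
    by (intro continuous_intros bounded_linear.continuous[OF bounded_linear_scaleC_left])
  ultimately show ?thesis
    using continuous_closed_vimage[OF closed_Compl[OF open_cinvertible]] by metis
qed

lemma cspectrum_add_scaleC_one: "c \<in> cspectrum (x + scaleC d 1) \<longleftrightarrow> c - d \<in> cspectrum (x::'a::cstar_algebra)"
proof -
  have eq: "x + scaleC d 1 - scaleC c 1 = x - scaleC (c - d) 1"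
    by (simp add: scaleC.scale_left_diff_distrib)
  show ?thesis unfolding cspectrum_def mem_Collect_eq eq by (rule refl)
qed

lemma cspectrum_minus: "c \<in> cspectrum (- x) \<longleftrightarrow> - c \<in> cspectrum (x::'a::cstar_algebra)"
proof -
  have eq: "- x - scaleC c 1 = - (x - scaleC (- c) 1)" by simp
  show ?thesis unfolding cspectrum_def mem_Collect_eq eq cinvertible_minus by (rule refl)
qed

lemma cspectrum_scaleR_one_diff:
  "c \<in> cspectrum (scaleR t 1 - x) \<longleftrightarrow> of_real t - c \<in> cspectrum (x::'a::cstar_algebra)"
proof -
  have eq: "scaleR t 1 - x - scaleC c 1 = - (x - scaleC (of_real t - c) 1)"
    by (simp add: scaleC.scale_left_diff_distrib scaleC_of_real)
  show ?thesis unfolding cspectrum_def mem_Collect_eq eq cinvertible_minus by (rule refl)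
qed

lemma cinvertible_one_minus_scaleC:
  fixes y :: "'a::cstar_algebra"
  assumes "inverse \<mu> \<notin> cspectrum y" "\<mu> \<noteq> 0"
  shows "cinvertible (1 - scaleC \<mu> y)"
proof -
  have "scaleC (- \<mu>) (y - scaleC (inverse \<mu>) 1) = 1 - scaleC \<mu> y"
    using assms(2) by (simp add: scaleC.scale_right_diff_distrib scaleC_scaleC)
  moreover have "cinvertible (scaleC (- \<mu>) (y - scaleC (inverse \<mu>) 1))"
    using assms by (intro cinvertible_scaleC) (auto simp: cspectrum_def)
  ultimately show ?thesis by simp
qed

section \<open>The spectral radius of self-adjoint elements\<close>

lemma roots_of_unity_power_sum:
  assumes K: "K > 0" and m: "m < K"
  shows "(\<Sum>j<K. cis (2*pi/K) ^ (j*m)) = (if m = 0 then of_nat K else 0)"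
proof (cases "m = 0")
  case False
  define z where "z = cis (2*pi/K) ^ m"
  have z: "z = cis (real m * (2*pi/K))" by (simp only: z_def Complex.DeMoivre)
  have "z \<noteq> 1"
  proof
    assume "z = 1"
    then have "cos (real m * (2*pi/K)) = 1" using z by (simp add: complex_eq_iff)
    then obtain k :: int where "real m * (2*pi/K) = of_int k * (2*pi)"
      by (auto simp: cos_one_2pi_int)
    then have "real m = of_int k * real K" using K by (simp add: field_simps)
    then have km: "int m = k * int K" by (metis of_int_eq_iff of_int_mult of_int_of_nat_eq)
    then have "0 < k * int K" using False by simp
    then have "k > 0" using K by (simp add: zero_less_mult_iff)
    then have "int K \<le> k * int K" using mult_right_mono[of 1 k "int K"] by simp
    then show False using km m by linarith
  qed
  moreover have "z ^ K = 1"
  proof -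
    have "z ^ K = cis (real K * (real m * (2*pi/K)))" by (simp add: z Complex.DeMoivre)
    also have "\<dots> = cis (real m * (2*pi))" using K by simp
    finally show ?thesis by (metis Complex.DeMoivre cis_2pi power_one)
  qed
  moreover have "(\<Sum>j<K. cis (2*pi/K) ^ (j*m)) = (\<Sum>j<K. z ^ j)"
    by (simp add: z_def power_mult[symmetric] mult.commute)
  ultimately show ?thesis using False by (simp add: geometric_sum)
qed simp

lemma left_inverse_one_minus_power:
  fixes y :: "'a::cstar_algebra"
  assumes "F * (1 - scaleC \<mu> y) = 1"
  shows "F * (1 - scaleC (\<mu> ^ K) (y ^ K)) = (\<Sum>m<K. scaleC (\<mu> ^ m) (y ^ m))"
proof -
  have "1 - scaleC (\<mu> ^ K) (y ^ K) = (1 - scaleC \<mu> y) * (\<Sum>m<K. scaleC (\<mu> ^ m) (y ^ m))"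
    using one_minus_mult_geometric_sum[of "scaleC \<mu> y" K] by (simp add: scaleC_power)
  then show ?thesis using assms by (simp add: mult.assoc[symmetric])
qed

text \<open>Averaging a left inverse of \<open>1 - \<mu> y\<close> over the \<open>K\<close>-th roots of unity times \<open>r\<close>
  kills all powers \<open>y ^ m\<close> with \<open>0 < m < K\<close>, leaving a left inverse of \<open>1 - r ^ K y ^ K\<close>.\<close>
lemma root_average_left_inverse:
  fixes y :: "'a::cstar_algebra" and r :: complex
  assumes K: "K > 0" and F: "\<And>j. F j * (1 - scaleC (cis (2*pi/K) ^ j * r) y) = 1"
  shows "scaleR (1 / real K) (\<Sum>j<K. F j) * (1 - scaleC (r ^ K) (y ^ K)) = 1"
proof -
  define \<omega> where "\<omega> = cis (2*pi/K)"
  have "\<omega> ^ K = cis (real K * (2*pi/K))" by (simp add: \<omega>_def Complex.DeMoivre)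
  also have "\<dots> = 1" using K by simp
  finally have \<omega>K: "\<omega> ^ K = 1" .
  have each: "F j * (1 - scaleC (r ^ K) (y ^ K)) = (\<Sum>m<K. scaleC (\<omega> ^ (j*m) * r ^ m) (y ^ m))" for j
  proof -
    have "(\<omega> ^ j) ^ K = 1" by (metis \<omega>K power_mult mult.commute power_one)
    then show ?thesis
      using left_inverse_one_minus_power[OF F[of j, folded \<omega>_def], of K]
      by (simp add: power_mult_distrib power_mult)
  qed
  have "(\<Sum>j<K. F j) * (1 - scaleC (r ^ K) (y ^ K)) = (\<Sum>j<K. F j * (1 - scaleC (r ^ K) (y ^ K)))"
    by (rule sum_distrib_right)
  also have "\<dots> = (\<Sum>j<K. \<Sum>m<K. scaleC (\<omega> ^ (j*m) * r ^ m) (y ^ m))"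
    by (simp only: each)
  also have "\<dots> = (\<Sum>m<K. \<Sum>j<K. scaleC (\<omega> ^ (j*m) * r ^ m) (y ^ m))"
    by (rule sum.swap)
  also have "\<dots> = (\<Sum>m<K. scaleC ((\<Sum>j<K. \<omega> ^ (j*m)) * r ^ m) (y ^ m))"
    by (simp add: sum_distrib_right scaleC.scale_sum_left)
  also have "\<dots> = (\<Sum>m<K. if m = 0 then scaleC (of_nat K) 1 else 0)"
    by (intro sum.cong refl) (simp add: \<omega>_def roots_of_unity_power_sum[OF K])
  also have "\<dots> = scaleR (real K) 1"
    using K by (simp flip: scaleC_of_real)
  finally show ?thesis using K by simp
qed

lemma norm_le_three_if_close_left_inverses:
  fixes G G' e x :: "'a::real_normed_algebra_1"
  assumes G': "G' * (1 - e) = 1" and e: "norm e < 1/5"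
    and G: "G * (1 - x) = 1" and GG': "norm (G - G') \<le> 1/4"
  shows "norm x \<le> 3"
proof -
  have "G' - 1 = G' - G' * (1 - e)" using G' by simp
  also have "\<dots> = G' * e" by (simp add: algebra_simps)
  finally have G'_eq: "G' - 1 = G' * e" .
  have "norm G' \<le> 1 + norm (G' - 1)" using norm_triangle_ineq[of 1 "G' - 1"] by simp
  also have "\<dots> \<le> 1 + norm G' * (1/5)"
    using e norm_mult_ineq[of G' e] mult_left_mono[of "norm e" "1/5" "norm G'"]
    by (simp add: G'_eq)
  finally have "norm G' \<le> 5/4" by simp
  then have "norm (G' - 1) \<le> 1/4"
    using e norm_mult_ineq[of G' e] mult_mono[of "norm G'" "5/4" "norm e" "1/5"]
    by (simp add: G'_eq)
  then have G_near_1: "norm (1 - G) \<le> 1/2"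
    using GG' norm_triangle_ineq[of "G' - 1" "G - G'"] by (simp add: norm_minus_commute)
  have "1 - x = 1 + (1 - G) * (1 - x)" using G by (simp add: left_diff_distrib)
  then have "norm (1 - x) \<le> 1 + norm (1 - G) * norm (1 - x)"
    using norm_triangle_ineq[of 1 "(1 - G) * (1 - x)"] norm_mult_ineq[of "1 - G" "1 - x"]
    by (metis (no_types, opaque_lifting) add_left_mono norm_one order_trans)
  also have "\<dots> \<le> 1 + 1/2 * norm (1 - x)"
    using G_near_1 by (intro add_left_mono mult_right_mono) auto
  finally have "norm (1 - x) \<le> 2" by simp
  then show ?thesis using norm_triangle_ineq4[of 1 "1 - x"] by simp
qed

lemma scaled_powers_tendsto_zero_below:
  fixes y :: "'a::real_normed_algebra_1"
  assumes bounded: "Bseq (\<lambda>K. a ^ K * norm (y ^ K))" and r: "0 \<le> r" "r < a"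
  shows "(\<lambda>K. r ^ K * norm (y ^ K)) \<longlonglongrightarrow> 0"
proof -
  obtain C where C: "\<And>K. norm (a ^ K * norm (y ^ K)) \<le> C" using bounded unfolding Bseq_def by blast
  show ?thesis
  proof (rule Lim_null_comparison)
    show "\<forall>\<^sub>F K in sequentially. norm (r ^ K * norm (y ^ K)) \<le> (r / a) ^ K * C"
    proof (intro always_eventually allI)
      fix K
      have "(r / a) ^ K * a ^ K = r ^ K" using r by (simp add: power_divide)
      then have "norm (r ^ K * norm (y ^ K)) = (r / a) ^ K * (a ^ K * norm (y ^ K))"
        using r by (simp add: mult.assoc[symmetric])
      also have "\<dots> \<le> (r / a) ^ K * C"
        using C[of K] r by (intro mult_left_mono) auto
      finally show "norm (r ^ K * norm (y ^ K)) \<le> (r / a) ^ K * C" .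
    qed
    show "(\<lambda>K. (r / a) ^ K * C) \<longlonglongrightarrow> 0"
      using r by (intro tendsto_mult_left_zero LIMSEQ_power_zero) auto
  qed
qed

text \<open>The growth of \<open>r ^ K * norm (y ^ K)\<close> is controlled by a uniformly continuous family of
  left inverses of \<open>1 - \<mu> y\<close> on the disc of radius \<open>\<rho>\<close>; boundedness then propagates
  from \<open>r = 0\<close> up to \<open>r = \<rho>\<close> in steps smaller than \<open>\<delta>\<close>.\<close>
context
  fixes y :: "'a::cstar_algebra" and f :: "complex \<Rightarrow> 'a" and \<rho> \<delta> :: real
  assumes f_left_inverse: "\<And>\<mu>. cmod \<mu> \<le> \<rho> \<Longrightarrow> f \<mu> * (1 - scaleC \<mu> y) = 1"
    and f_uniform: "\<And>\<mu> \<mu>'. cmod \<mu> \<le> \<rho> \<Longrightarrow> cmod \<mu>' \<le> \<rho> \<Longrightarrow> cmod (\<mu> - \<mu>') < \<delta> \<Longrightarrow>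
      norm (f \<mu> - f \<mu>') \<le> 1/4"
begin

lemma Bseq_scaled_powers_near_null:
  assumes r: "0 \<le> r" "r \<le> \<rho>" and s: "0 \<le> s" "s \<le> \<rho>" and rs: "\<bar>r - s\<bar> < \<delta>"
    and null: "(\<lambda>K. s ^ K * norm (y ^ K)) \<longlonglongrightarrow> 0"
  shows "Bseq (\<lambda>K. r ^ K * norm (y ^ K))"
proof -
  define avg where "avg t K = scaleR (1 / real K) (\<Sum>j<K. f (cis (2*pi/K) ^ j * of_real t))" for t K
  have avg_inverse: "avg t K * (1 - scaleC (of_real t ^ K) (y ^ K)) = 1"
    if "K > 0" "0 \<le> t" "t \<le> \<rho>" for t K
    unfolding avg_def using that
    by (intro root_average_left_inverse f_left_inverse) (simp_all add: norm_mult norm_power)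
  have avg_close: "norm (avg r K - avg s K) \<le> 1/4" if "K > 0" for K
  proof -
    define D where "D j = f (cis (2*pi/K) ^ j * of_real r) - f (cis (2*pi/K) ^ j * of_real s)" for j
    have "norm (D j) \<le> 1/4" for j
      unfolding D_def using r s rs
      by (intro f_uniform) (simp_all add: norm_mult norm_power flip: right_diff_distrib of_real_diff)
    then have "norm (\<Sum>j<K. D j) \<le> real K * (1/4)"
      using norm_sum[of D "{..<K}"] sum_mono[of "{..<K}" "\<lambda>j. norm (D j)" "\<lambda>_. 1/4"] by simp
    then show ?thesis
      using that by (simp add: avg_def D_def sum_subtractf flip: scaleR_diff_right)
  qed
  obtain N where N: "\<And>K. N \<le> K \<Longrightarrow> s ^ K * norm (y ^ K) < 1/5"
    using order_tendstoD(2)[OF null, of "1/5"] by (auto simp: eventually_sequentially)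
  have norm_scaled: "norm (scaleC (of_real t ^ K) (y ^ K)) = t ^ K * norm (y ^ K)" if "0 \<le> t" for t K
    using that by (simp add: norm_scaleC norm_power)
  have bound: "r ^ K * norm (y ^ K) \<le> 3" if "N < K" for K
  proof -
    have "norm (scaleC (of_real r ^ K) (y ^ K)) \<le> 3"
    proof (rule norm_le_three_if_close_left_inverses)
      show "avg s K * (1 - scaleC (of_real s ^ K) (y ^ K)) = 1" using s that by (intro avg_inverse) auto
      show "norm (scaleC (of_real s ^ K) (y ^ K)) < 1/5" using N[of K] s that by (simp add: norm_scaled)
      show "avg r K * (1 - scaleC (of_real r ^ K) (y ^ K)) = 1" using r that by (intro avg_inverse) auto
      show "norm (avg r K - avg s K) \<le> 1/4" using that by (intro avg_close) simp
    qed
    then show ?thesis using r by (simp add: norm_scaled)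
  qed
  have "norm (r ^ (K + Suc N) * norm (y ^ (K + Suc N))) \<le> 3" for K
    using bound[of "K + Suc N"] r by (simp del: add_Suc_right power_Suc)
  then have "Bseq (\<lambda>K. r ^ (K + Suc N) * norm (y ^ (K + Suc N)))" by (rule BseqI')
  then show ?thesis by (rule Bseq_offset)
qed

lemma Bseq_scaled_powers_upto:
  assumes \<delta>: "\<delta> > 0" and r: "0 \<le> r" "r \<le> \<rho>"
  shows "Bseq (\<lambda>K. r ^ K * norm (y ^ K))"
proof -
  have "(\<lambda>K. 0 ^ Suc K * norm (y ^ Suc K)) \<longlonglongrightarrow> (0::real)" by simp
  then have null_at_0: "(\<lambda>K. 0 ^ K * norm (y ^ K)) \<longlonglongrightarrow> (0::real)" by (rule LIMSEQ_imp_Suc)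
  have small: "Bseq (\<lambda>K. t ^ K * norm (y ^ K))" if "0 \<le> t" "t \<le> \<rho>" "t < \<delta>" for t
    using that by (intro Bseq_scaled_powers_near_null[OF _ _ _ _ _ null_at_0]) auto
  have "Bseq (\<lambda>K. t ^ K * norm (y ^ K))" if "0 \<le> t" "t \<le> \<rho>" "t \<le> real n * \<delta> / 2" for n t
    using that
  proof (induction n arbitrary: t)
    case 0
    then show ?case using small \<delta> by simp
  next
    case (Suc n)
    show ?case
    proof (cases "t < \<delta>")
      case True
      then show ?thesis using small Suc.prems by blast
    next
      case False
      have "Bseq (\<lambda>K. (t - \<delta>/2) ^ K * norm (y ^ K))"
        using Suc.prems False \<delta> by (intro Suc.IH) (auto simp: field_simps)
      then have "(\<lambda>K. (t - 3*\<delta>/4) ^ K * norm (y ^ K)) \<longlonglongrightarrow> 0"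
        by (rule scaled_powers_tendsto_zero_below) (use False \<delta> in auto)
      then show ?thesis
        using Suc.prems False \<delta> by (intro Bseq_scaled_powers_near_null[of t "t - 3*\<delta>/4"]) auto
    qed
  qed
  moreover obtain n where "2 * r / \<delta> < real n" using reals_Archimedean2 by blast
  then have "r \<le> real n * \<delta> / 2" using \<delta> by (simp add: field_simps)
  ultimately show ?thesis using r by blast
qed

end

lemma Bseq_scaled_powers:
  fixes y :: "'a::cstar_algebra"
  assumes inv: "\<And>\<mu>. cmod \<mu> \<le> \<rho> \<Longrightarrow> cinvertible (1 - scaleC \<mu> y)" and \<rho>: "0 \<le> \<rho>"
  shows "Bseq (\<lambda>K. \<rho> ^ K * norm (y ^ K))"
proof -
  define f where "f \<mu> = cinv (1 - scaleC \<mu> y)" for \<mu>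
  have "continuous_on (cball 0 \<rho>) f" unfolding f_def using inv by (intro continuous_on_resolvent) auto
  then have "uniformly_continuous_on (cball 0 \<rho>) f" using compact_cball by (rule compact_uniformly_continuous)
  then obtain \<delta> where \<delta>: "\<delta> > 0"
    and close: "\<And>\<mu> \<mu>'. \<mu> \<in> cball 0 \<rho> \<Longrightarrow> \<mu>' \<in> cball 0 \<rho> \<Longrightarrow> dist \<mu>' \<mu> < \<delta> \<Longrightarrow>
      dist (f \<mu>') (f \<mu>) < 1/4"
    unfolding uniformly_continuous_on_def by (metis divide_pos_pos zero_less_numeral zero_less_one)
  show ?thesis
  proof (rule Bseq_scaled_powers_upto[where f = f and \<delta> = \<delta>])
    show "f \<mu> * (1 - scaleC \<mu> y) = 1" if "cmod \<mu> \<le> \<rho>" for \<mu>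
      using cinv_inverse[OF inv[OF that]] by (simp add: f_def)
    show "norm (f \<mu> - f \<mu>') \<le> 1/4" if "cmod \<mu> \<le> \<rho>" "cmod \<mu>' \<le> \<rho>" "cmod (\<mu> - \<mu>') < \<delta>" for \<mu> \<mu>'
      using close[of \<mu>' \<mu>] that by (simp add: dist_norm)
  qed (use \<delta> \<rho> in auto)
qed

text \<open>If the spectrum lies in the disc of radius \<open>r\<close>, then \<open>\<rho> ^ K * norm (y ^ K)\<close> stays
  bounded for \<open>\<rho> * r < 1\<close>; for self-adjoint \<open>y\<close> the C*-identity gives
  \<open>norm (y ^ 2 ^ m) = norm y ^ 2 ^ m\<close>, which forces \<open>norm y \<le> r\<close>.\<close>
lemma norm_le_if_cspectrum_le:
  fixes y :: "'a::cstar_algebra"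
  assumes y: "y \<in> sa" and r: "0 \<le> r" and sp: "\<And>c. c \<in> cspectrum y \<Longrightarrow> cmod c \<le> r"
  shows "norm y \<le> r"
proof (rule ccontr)
  assume "\<not> norm y \<le> r"
  define \<rho> where "\<rho> = 2 / (norm y + r)"
  have \<rho>: "0 < \<rho>" "\<rho> * r < 1" "1 < \<rho> * norm y"
    using \<open>\<not> norm y \<le> r\<close> r by (auto simp: \<rho>_def field_simps)
  have inv: "cinvertible (1 - scaleC \<mu> y)" if \<mu>: "cmod \<mu> \<le> \<rho>" for \<mu>
  proof (cases "\<mu> = 0")
    case True
    then show ?thesis by (simp add: cinvertibleI[of 1 1])
  next
    case False
    have "cmod \<mu> * r < 1" using mult_right_mono[OF \<mu> r] \<rho>(2) by linarith
    then have "r < 1 / cmod \<mu>" using False by (simp add: pos_less_divide_eq mult.commute)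
    then have "inverse \<mu> \<notin> cspectrum y" using sp by (force simp: inverse_eq_divide norm_divide)
    then show ?thesis using False by (rule cinvertible_one_minus_scaleC)
  qed
  have "Bseq (\<lambda>K. \<rho> ^ K * norm (y ^ K))" using \<rho> by (intro Bseq_scaled_powers inv) auto
  then obtain C where C: "\<And>K. norm (\<rho> ^ K * norm (y ^ K)) \<le> C" unfolding Bseq_def by blast
  obtain m where m: "C < (\<rho> * norm y) ^ m" using real_arch_pow[OF \<rho>(3)] by blast
  have "(\<rho> * norm y) ^ m \<le> (\<rho> * norm y) ^ (2 ^ m)"
    using \<rho>(3) less_exp[of m] by (intro power_increasing) auto
  also have "\<dots> = \<rho> ^ (2 ^ m) * norm (y ^ (2 ^ m))"
    using norm_power_two_power_sa[OF y] by (simp add: power_mult_distrib)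
  also have "\<dots> \<le> C" using C[of "2 ^ m"] \<rho> by simp
  finally show False using m by simp
qed

section \<open>Real spectrum, positivity and the order\<close>

lemma add_scaleC_one_mult:
  "(y + scaleC a 1) * (y + scaleC b 1) = y * y + scaleC (a + b) y + scaleC (a * b) (1::'a::cstar_algebra)"
proof -
  have "(y + scaleC a 1) * (y + scaleC b 1) = y * y + y * scaleC b 1 + (scaleC a 1 * y + scaleC a 1 * scaleC b 1)"
    by (simp add: distrib_left distrib_right add.assoc)
  also have "\<dots> = y * y + (scaleC a y + scaleC b y) + scaleC (a * b) 1"
    by (simp add: scaleC_one_mult mult_scaleC_one scaleC_scaleC add_ac)
  finally show ?thesis by (simp add: scaleC_add_left)
qed

text \<open>\<open>c + \<i> s\<close> lies in the spectrum of \<open>y + \<i> s\<close>, whose squared norm the C*-identity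
  bounds by \<open>norm y ^ 2 + s ^ 2\<close>; letting \<open>s\<close> grow will force \<open>Im c = 0\<close>.\<close>
lemma cspectrum_sa_shift_bound:
  fixes y :: "'a::cstar_algebra"
  assumes y: "y \<in> sa" and c: "c \<in> cspectrum y"
  shows "(Re c)\<^sup>2 + (Im c + s)\<^sup>2 \<le> norm y ^ 2 + s\<^sup>2"
proof -
  define z where "z = y + scaleC (\<i> * of_real s) 1"
  have "c + \<i> * of_real s \<in> cspectrum z"
    unfolding z_def cspectrum_add_scaleC_one using c by simp
  then have "cmod (c + \<i> * of_real s) \<le> norm z" by (rule cspectrum_norm_le)
  then have "cmod (c + \<i> * of_real s) ^ 2 \<le> norm z ^ 2" by (intro power_mono) auto
  moreover have "cmod (c + \<i> * of_real s) ^ 2 = (Re c)\<^sup>2 + (Im c + s)\<^sup>2"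
    by (simp add: cmod_power2)
  ultimately have "(Re c)\<^sup>2 + (Im c + s)\<^sup>2 \<le> norm z ^ 2" by simp
  moreover have "adj z * z = y * y + scaleR (s\<^sup>2) 1"
  proof -
    have "adj z = y + scaleC (- (\<i> * of_real s)) 1"
      using y by (simp add: z_def adj_add adj_scaleC sa_iff)
    then have "adj z * z = y * y + scaleC (- (\<i> * of_real s) + \<i> * of_real s) y
        + scaleC (- (\<i> * of_real s) * (\<i> * of_real s)) 1"
      by (simp only: z_def add_scaleC_one_mult)
    also have "- (\<i> * of_real s) * (\<i> * of_real s) = of_real (s\<^sup>2)"
      by (simp add: complex_eq_iff power2_eq_square)
    finally have "adj z * z = y * y + scaleC (of_real (s\<^sup>2)) 1" by simp
    then show ?thesis by (simp only: scaleC_of_real)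
  qed
  then have "norm z ^ 2 \<le> norm y ^ 2 + s\<^sup>2"
    using norm_triangle_ineq[of "y * y" "scaleR (s\<^sup>2) (1::'a)"] norm_mult_self_sa[OF y]
    by (simp add: cstar_identity[symmetric])
  ultimately show ?thesis by linarith
qed

lemma cspectrum_sa_real:
  fixes y :: "'a::cstar_algebra"
  assumes y: "y \<in> sa" and c: "c \<in> cspectrum y"
  shows "c \<in> \<real>"
proof (rule ccontr)
  assume "c \<notin> \<real>"
  then have "Im c \<noteq> 0" by (simp add: complex_is_Real_iff)
  define s where "s = (norm y ^ 2 + 1) / (2 * Im c)"
  have "2 * Im c * s = norm y ^ 2 + 1" using \<open>Im c \<noteq> 0\<close> by (simp add: s_def)
  then have "(Re c)\<^sup>2 + (Im c)\<^sup>2 + (norm y ^ 2 + 1) + s\<^sup>2 \<le> norm y ^ 2 + s\<^sup>2"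
    using cspectrum_sa_shift_bound[OF y c, of s] by (simp add: power2_sum)
  then show False by (smt (verit) zero_le_power2)
qed

text \<open>Unlike the spectral definition, this characterisation is visibly stable under addition.\<close>
lemma cpositive_iff_norm:
  fixes x :: "'a::cstar_algebra"
  assumes x: "x \<in> sa" and t: "norm x \<le> t"
  shows "cpositive x \<longleftrightarrow> norm (scaleR t 1 - x) \<le> t"
proof
  assume pos: "cpositive x"
  have t0: "t \<ge> 0" using t norm_ge_zero[of x] by linarith
  show "norm (scaleR t 1 - x) \<le> t"
  proof (rule norm_le_if_cspectrum_le[OF _ t0])
    show "scaleR t 1 - x \<in> sa" using x by (simp add: sa_diff sa_scaleR sa_one)
    fix c assume "c \<in> cspectrum (scaleR t 1 - x)"
    then have w: "of_real t - c \<in> cspectrum x" by (simp add: cspectrum_scaleR_one_diff)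
    then have "of_real t - c \<in> \<real>" "0 \<le> Re (of_real t - c)" using pos by (auto simp: cpositive_def)
    moreover have "cmod (of_real t - c) \<le> t" using cspectrum_norm_le[OF w] t by simp
    ultimately have "Im c = 0" "0 \<le> t - Re c" "Re (of_real t - c) \<le> t"
      using complex_Re_le_cmod[of "of_real t - c"] by (auto simp: complex_is_Real_iff)
    then show "cmod c \<le> t" by (simp add: cmod_eq_Re)
  qed
next
  assume n: "norm (scaleR t 1 - x) \<le> t"
  show "cpositive x" unfolding cpositive_def
  proof (intro conjI x subsetI)
    fix c assume c: "c \<in> cspectrum x"
    have "of_real t - (of_real t - c) \<in> cspectrum x" using c by simp
    then have "of_real t - c \<in> cspectrum (scaleR t 1 - x)" by (simp only: cspectrum_scaleR_one_diff)
    then have "cmod (of_real t - c) \<le> t" using cspectrum_norm_le n by fastforce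
    moreover have "Im c = 0" using cspectrum_sa_real[OF x c] by (simp add: complex_is_Real_iff)
    ultimately show "c \<in> {z. z \<in> \<real> \<and> 0 \<le> Re z}"
      by (simp add: cmod_eq_Re complex_is_Real_iff)
  qed
qed

lemma cpositive_add:
  fixes a b :: "'a::cstar_algebra"
  assumes a: "cpositive a" and b: "cpositive b"
  shows "cpositive (a + b)"
proof -
  have sa: "a \<in> sa" "b \<in> sa" using a b by (simp_all add: cpositive_def)
  have "norm (scaleR (norm a) 1 - a) \<le> norm a" "norm (scaleR (norm b) 1 - b) \<le> norm b"
    using cpositive_iff_norm[OF sa(1) order_refl] cpositive_iff_norm[OF sa(2) order_refl] a b by simp_all
  moreover have eq: "scaleR (norm a + norm b) 1 - (a + b) = (scaleR (norm a) 1 - a) + (scaleR (norm b) 1 - b)"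
    by (simp add: scaleR_add_left)
  ultimately have "norm (scaleR (norm a + norm b) 1 - (a + b)) \<le> norm a + norm b"
    unfolding eq using norm_triangle_ineq[of "scaleR (norm a) 1 - a" "scaleR (norm b) 1 - b"] by linarith
  then show ?thesis
    using cpositive_iff_norm[of "a + b" "norm a + norm b"] sa norm_triangle_ineq[of a b] by (simp add: sa_add)
qed

lemma cpositive_zero: "cpositive (0::'a::cstar_algebra)"
  unfolding cpositive_def
proof (intro conjI sa_zero subsetI)
  fix c assume c: "c \<in> cspectrum (0::'a)"
  have "c = 0"
  proof (rule ccontr)
    assume "c \<noteq> 0"
    then have "cinvertible (0 - scaleC c (1::'a))" by (simp add: cinvertible_minus cinvertible_scaleC_one)
    then show False using c by (simp add: cspectrum_def)
  qed
  then show "c \<in> {z. z \<in> \<real> \<and> 0 \<le> Re z}" by simp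
qed

lemma cpositive_antisym:
  fixes x :: "'a::cstar_algebra"
  assumes "cpositive x" "cpositive (- x)"
  shows "x = 0"
proof -
  have x: "x \<in> sa" using assms by (simp add: cpositive_def)
  have "cmod c \<le> 0" if c: "c \<in> cspectrum x" for c
  proof -
    have "- c \<in> cspectrum (- x)" using c by (simp add: cspectrum_minus)
    then have "0 \<le> Re (- c)" using assms(2) by (auto simp: cpositive_def)
    moreover have "0 \<le> Re c" using c assms(1) by (auto simp: cpositive_def)
    moreover have "Im c = 0" using cspectrum_sa_real[OF x c] by (simp add: complex_is_Real_iff)
    ultimately show ?thesis by (simp add: complex_eq_iff)
  qed
  then have "norm x \<le> 0" using norm_le_if_cspectrum_le[OF x order_refl] by blast
  then show ?thesis by simp
qed

lemma sa_le_refl: "sa_le x (x::'a::cstar_algebra)"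
  by (simp add: sa_le_def cpositive_zero)

lemma sa_le_trans: "sa_le x y \<Longrightarrow> sa_le y z \<Longrightarrow> sa_le x (z::'a::cstar_algebra)"
  unfolding sa_le_def using cpositive_add[of "z - y" "y - x"] by simp

lemma sa_le_antisym: "sa_le x y \<Longrightarrow> sa_le y x \<Longrightarrow> x = (y::'a::cstar_algebra)"
  unfolding sa_le_def using cpositive_antisym[of "y - x"] by simp

lemma sa_le_minus_iff: "sa_le (- y) (- x) \<longleftrightarrow> sa_le x (y::'a::cstar_algebra)"
  unfolding sa_le_def by (simp add: add.commute)

lemma sa_le_minus_swap_left: "sa_le (- x) y \<Longrightarrow> sa_le (- y) (x::'a::cstar_algebra)"
  unfolding sa_le_def by (simp add: add.commute)

lemma sa_le_minus_swap_right: "sa_le x (- y) \<Longrightarrow> sa_le y (- (x::'a::cstar_algebra))"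
  unfolding sa_le_def by (simp only: diff_conv_add_uminus add.commute)

lemma sa_le_scaleR_norm: "x \<in> sa \<Longrightarrow> sa_le x (scaleR (norm x) (1::'a::cstar_algebra))"
proof -
  assume x: "x \<in> sa"
  define z where "z = scaleR (norm x) 1 - x"
  have "z \<in> sa" using x by (simp add: z_def sa_diff sa_scaleR sa_one)
  moreover have "norm z \<le> norm x + norm x"
    unfolding z_def using norm_triangle_ineq4[of "scaleR (norm x) (1::'a)" x] by simp
  moreover have "scaleR (norm x + norm x) 1 - z = scaleR (norm x) 1 + x"
    by (simp only: z_def scaleR_add_left) (simp add: diff_diff_eq2)
  then have "norm (scaleR (norm x + norm x) 1 - z) \<le> norm x + norm x"
    using norm_triangle_ineq[of "scaleR (norm x) (1::'a)" x] by simp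
  ultimately have "cpositive z" using cpositive_iff_norm by blast
  then show ?thesis by (simp add: sa_le_def z_def)
qed

section \<open>Polynomials in one element\<close>

definition peval :: "complex poly \<Rightarrow> 'a::cstar_algebra \<Rightarrow> 'a" where
  "peval p x = (\<Sum>i\<le>degree p. scaleC (coeff p i) (x ^ i))"

lemma peval_degree_le: "degree p \<le> n \<Longrightarrow> peval p x = (\<Sum>i\<le>n. scaleC (coeff p i) (x ^ i))"
  unfolding peval_def by (rule sum.mono_neutral_left) (auto simp: coeff_eq_0)

lemma peval_add: "peval (p + q) x = peval p x + peval q x"
proof -
  define n where "n = max (degree p) (degree q)"
  have "degree (p + q) \<le> n" unfolding n_def by (rule degree_add_le_max)
  then show ?thesis
    by (simp add: peval_degree_le[of "p + q" n] peval_degree_le[of p n] peval_degree_le[of q n] n_def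
        scaleC_add_left sum.distrib)
qed

lemma peval_diff: "peval (p - q) x = peval p x - peval q x"
proof -
  define n where "n = max (degree p) (degree q)"
  have "degree (p - q) \<le> n" unfolding n_def by (rule degree_diff_le_max)
  then show ?thesis
    by (simp add: peval_degree_le[of "p - q" n] peval_degree_le[of p n] peval_degree_le[of q n] n_def
        scaleC.scale_left_diff_distrib sum_subtractf)
qed

lemma peval_smult: "peval (smult a p) x = scaleC a (peval p x)"
  by (simp add: peval_degree_le[OF degree_smult_le] peval_def scaleC_scaleC scaleC.scale_sum_right)

lemma peval_pCons: "peval (pCons a p) x = scaleC a 1 + x * peval p x"
proof -
  have "peval (pCons a p) x = (\<Sum>i\<le>Suc (degree p). scaleC (coeff (pCons a p) i) (x ^ i))"
    by (rule peval_degree_le[OF degree_pCons_le])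
  also have "\<dots> = scaleC a 1 + (\<Sum>i\<le>degree p. scaleC (coeff p i) (x ^ Suc i))"
    by (subst sum.atMost_Suc_shift) simp
  also have "(\<Sum>i\<le>degree p. scaleC (coeff p i) (x ^ Suc i)) = x * peval p x"
    by (simp add: peval_def sum_distrib_left scaleC_mult_right)
  finally show ?thesis .
qed

lemma peval_0 [simp]: "peval 0 x = 0"
  by (simp add: peval_def)

lemma peval_const: "peval [:a:] x = scaleC a 1"
  by (simp add: peval_pCons)

lemma peval_linear: "peval [:-z, 1:] x = x - scaleC z 1"
  by (simp add: peval_pCons)

lemma peval_mult: "peval (p * q) x = peval p x * peval q (x::'a::cstar_algebra)"
proof (induct p)
  case (pCons a p)
  have "peval (pCons a p * q) x = scaleC a (peval q x) + x * peval (p * q) x"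
    by (simp add: peval_add peval_smult peval_pCons)
  also have "\<dots> = (scaleC a 1 + x * peval p x) * peval q x"
    by (simp add: pCons distrib_right scaleC_one_mult mult.assoc)
  finally show ?case by (simp add: peval_pCons)
qed simp

lemma peval_commute: "peval p x * peval q x = peval q x * peval p (x::'a::cstar_algebra)"
  by (metis peval_mult mult.commute)

lemma peval_sa: "(\<And>i. coeff p i \<in> \<real>) \<Longrightarrow> x \<in> sa \<Longrightarrow> peval p x \<in> sa"
  by (simp add: sa_iff peval_def adj_sum adj_scaleC adj_power Reals_cnj_iff)

lemma cspectrum_sa_nonempty:
  assumes "(x::'a::cstar_algebra) \<in> sa"
  shows "cspectrum x \<noteq> {}"
proof
  assume "cspectrum x = {}"
  then have "x = 0" using norm_le_if_cspectrum_le[OF assms order_refl] by simp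
  moreover have "(0::complex) \<in> cspectrum (0::'a)" by (simp add: cspectrum_def cinvertible_def)
  ultimately show False using \<open>cspectrum x = {}\<close> by simp
qed

lemma cinvertible_peval:
  fixes x :: "'a::cstar_algebra"
  shows "q \<noteq> 0 \<Longrightarrow> (\<And>z. poly q z = 0 \<Longrightarrow> z \<notin> cspectrum x) \<Longrightarrow> cinvertible (peval q x)"
proof (induct "degree q" arbitrary: q rule: less_induct)
  case less
  show ?case
  proof (cases "degree q = 0")
    case True
    then have q: "q = [:coeff q 0:]" using degree_0_id by metis
    then have "coeff q 0 \<noteq> 0" using less.prems(1) by (metis pCons_0_0)
    then show ?thesis by (subst q) (simp add: peval_const cinvertible_scaleC_one)
  next
    case False
    then have "\<not> constant (poly q)" by (simp add: constant_degree)
    then obtain z where z: "poly q z = 0" using fundamental_theorem_of_algebra by blast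
    then obtain r where r: "q = [:-z, 1:] * r" using poly_eq_0_iff_dvd by (metis dvdE)
    have "r \<noteq> 0" using r less.prems(1) by auto
    then have "degree r < degree q" using r degree_mult_eq[of "[:-z, 1:]" r] by simp
    moreover have "\<And>w. poly r w = 0 \<Longrightarrow> w \<notin> cspectrum x" using r less.prems(2) by simp
    ultimately have "cinvertible (peval r x)" using less.hyps \<open>r \<noteq> 0\<close> by blast
    moreover have "cinvertible (x - scaleC z 1)" using less.prems(2)[OF z] by (simp add: cspectrum_def)
    moreover have "peval q x = (x - scaleC z 1) * peval r x" using r by (simp only: peval_mult peval_linear)
    ultimately show ?thesis by (simp add: cinvertible_mult)
  qed
qed

lemma cspectrum_peval_subset:
  fixes x :: "'a::cstar_algebra"
  assumes x: "x \<in> sa" and \<mu>: "\<mu> \<in> cspectrum (peval p x)"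
  shows "\<exists>c\<in>cspectrum x. poly p c = \<mu>"
proof (rule ccontr)
  assume none: "\<not> (\<exists>c\<in>cspectrum x. poly p c = \<mu>)"
  show False
  proof (cases "p = [:\<mu>:]")
    case True
    then show False using none cspectrum_sa_nonempty[OF x] by auto
  next
    case False
    then have "cinvertible (peval (p - [:\<mu>:]) x)" using none by (intro cinvertible_peval) auto
    then show False using \<mu> by (simp add: peval_diff peval_const cspectrum_def)
  qed
qed

lemma poly_in_cspectrum_peval:
  fixes x :: "'a::cstar_algebra"
  assumes c: "c \<in> cspectrum x"
  shows "poly p c \<in> cspectrum (peval p x)"
proof (rule ccontr)
  assume "poly p c \<notin> cspectrum (peval p x)"
  then have inv: "cinvertible (peval p x - scaleC (poly p c) 1)" by (simp add: cspectrum_def)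
  have "p - [:poly p c:] = [:-c, 1:] * synthetic_div p c"
    using synthetic_div_correct'[of c p] by (simp add: algebra_simps)
  then have "peval p x - scaleC (poly p c) 1 = peval [:-c, 1:] x * peval (synthetic_div p c) x"
    by (metis peval_diff peval_const peval_mult)
  then have "cinvertible (peval [:-c, 1:] x)"
    using inv by (metis cinvertible_commuting_factor peval_commute)
  then show False using c by (simp add: peval_linear cspectrum_def)
qed

lemma norm_peval_le:
  fixes x :: "'a::cstar_algebra"
  assumes x: "x \<in> sa" and p: "\<And>i. coeff p i \<in> \<real>" and r: "0 \<le> r"
    and bound: "\<And>c. c \<in> cspectrum x \<Longrightarrow> cmod (poly p c) \<le> r"
  shows "norm (peval p x) \<le> r"
  using cspectrum_peval_subset[OF x] bound by (intro norm_le_if_cspectrum_le[OF peval_sa[OF p x] r]) blast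

lemma cmod_poly_le_norm_peval:
  "c \<in> cspectrum (x::'a::cstar_algebra) \<Longrightarrow> cmod (poly p c) \<le> norm (peval p x)"
  by (rule cspectrum_norm_le[OF poly_in_cspectrum_peval])

lemma hom_add: "unital_star_mono \<pi> \<Longrightarrow> \<pi> (x + y) = \<pi> x + \<pi> y" by (simp add: unital_star_mono_def)
lemma hom_mult: "unital_star_mono \<pi> \<Longrightarrow> \<pi> (x * y) = \<pi> x * \<pi> y" by (simp add: unital_star_mono_def)
lemma hom_one: "unital_star_mono \<pi> \<Longrightarrow> \<pi> 1 = 1" by (simp add: unital_star_mono_def)
lemma hom_scaleC: "unital_star_mono \<pi> \<Longrightarrow> \<pi> (scaleC c x) = scaleC c (\<pi> x)" by (simp add: unital_star_mono_def)
lemma hom_adj: "unital_star_mono \<pi> \<Longrightarrow> \<pi> (adj x) = adj (\<pi> x)" by (simp add: unital_star_mono_def)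
lemma hom_inj: "unital_star_mono \<pi> \<Longrightarrow> inj \<pi>" by (simp add: unital_star_mono_def)

lemma hom_zero: "unital_star_mono \<pi> \<Longrightarrow> \<pi> 0 = 0"
  using hom_add[of \<pi> 0 0] by simp

lemma hom_minus: "unital_star_mono \<pi> \<Longrightarrow> \<pi> (- x) = - \<pi> x"
  using hom_add[of \<pi> x "- x"] hom_zero[of \<pi>] by (simp add: eq_neg_iff_add_eq_0 add.commute)

lemma hom_diff: "unital_star_mono \<pi> \<Longrightarrow> \<pi> (x - y) = \<pi> x - \<pi> y"
  by (simp add: diff_conv_add_uminus hom_add hom_minus del: add_uminus_conv_diff)

lemma hom_sum: "unital_star_mono \<pi> \<Longrightarrow> \<pi> (sum f A) = (\<Sum>i\<in>A. \<pi> (f i))"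
  by (induct A rule: infinite_finite_induct) (auto simp: hom_add hom_zero)

lemma hom_power: "unital_star_mono \<pi> \<Longrightarrow> \<pi> (x ^ n) = \<pi> x ^ n"
  by (induct n) (auto simp: hom_mult hom_one)

lemma hom_scaleR: "unital_star_mono \<pi> \<Longrightarrow> \<pi> (scaleR r x) = scaleR r (\<pi> x)"
  by (metis hom_scaleC scaleC_of_real)

lemma hom_sa: "unital_star_mono \<pi> \<Longrightarrow> x \<in> sa \<Longrightarrow> \<pi> x \<in> sa"
  by (simp add: sa_iff hom_adj[symmetric])

lemma hom_peval: "unital_star_mono \<pi> \<Longrightarrow> \<pi> (peval p x) = peval p (\<pi> x)"
  by (simp add: peval_def hom_sum hom_scaleC hom_power)

lemma cspectrum_hom_subset:
  assumes "unital_star_mono \<pi>"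
  shows "cspectrum (\<pi> x) \<subseteq> cspectrum x"
proof
  fix c assume c: "c \<in> cspectrum (\<pi> x)"
  show "c \<in> cspectrum x"
  proof (rule ccontr)
    assume "c \<notin> cspectrum x"
    then obtain z where z: "(x - scaleC c 1) * z = 1" "z * (x - scaleC c 1) = 1"
      by (auto simp: cspectrum_def cinvertible_def)
    have "\<pi> (x - scaleC c 1) = \<pi> x - scaleC c 1"
      using assms by (simp add: hom_diff hom_scaleC hom_one)
    then have "(\<pi> x - scaleC c 1) * \<pi> z = 1" "\<pi> z * (\<pi> x - scaleC c 1) = 1"
      using z assms by (metis hom_mult hom_one)+
    then have "cinvertible (\<pi> x - scaleC c 1)" by (rule cinvertibleI)
    then show False using c by (simp add: cspectrum_def)
  qed
qed

lemma norm_hom_le: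
  assumes "unital_star_mono \<pi>" "x \<in> sa"
  shows "norm (\<pi> x) \<le> norm x"
  using cspectrum_hom_subset[OF assms(1)] cspectrum_norm_le
  by (intro norm_le_if_cspectrum_le[OF hom_sa[OF assms] norm_ge_zero]) blast

lemma hom_tendsto_sa:
  assumes \<pi>: "unital_star_mono \<pi>" and u: "\<And>n. u n \<in> sa" and L: "u \<longlonglongrightarrow> L"
  shows "(\<lambda>n. \<pi> (u n)) \<longlonglongrightarrow> \<pi> L"
proof -
  have "L \<in> sa" using u L by (rule sa_closed_limit)
  have "(\<lambda>n. \<pi> (u n) - \<pi> L) \<longlonglongrightarrow> 0"
  proof (rule Lim_null_comparison)
    have "norm (\<pi> (u n) - \<pi> L) \<le> norm (u n - L)" for n
      using norm_hom_le[OF \<pi> sa_diff[OF u \<open>L \<in> sa\<close>]] by (simp add: hom_diff[OF \<pi>])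
    then show "\<forall>\<^sub>F n in sequentially. norm (\<pi> (u n) - \<pi> L) \<le> norm (u n - L)" by simp
    show "(\<lambda>n. norm (u n - L)) \<longlonglongrightarrow> 0" using L by (simp add: tendsto_norm_zero_iff LIM_zero_iff)
  qed
  then show ?thesis by (simp add: LIM_zero_iff)
qed

section \<open>Spectral permanence\<close>

lemma real_polynomial_approximation:
  fixes f :: "real \<Rightarrow> real"
  assumes "compact S" "continuous_on S f"
  obtains P :: "nat \<Rightarrow> complex poly" where "\<And>n i. coeff (P n) i \<in> \<real>"
    and "\<And>n s. s \<in> S \<Longrightarrow> cmod (poly (P n) (of_real s) - of_real (f s)) < 1 / Suc n"
proof -
  have "\<exists>p. (\<forall>i. coeff p i \<in> \<real>) \<and> (\<forall>s\<in>S. cmod (poly p (of_real s) - of_real (f s)) < 1 / Suc n)"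
    for n
  proof -
    obtain g where g: "real_polynomial_function g" "\<And>s. s \<in> S \<Longrightarrow> \<bar>f s - g s\<bar> < 1 / Suc n"
      using Stone_Weierstrass_real_polynomial_function[OF assms, of "1 / Suc n"] by auto
    then obtain a m where a: "g = (\<lambda>s. \<Sum>i\<le>m. a i * s ^ i)"
      using real_polynomial_function_iff_sum by blast
    define p where "p = (\<Sum>i\<le>m. monom (complex_of_real (a i)) i)"
    have "coeff p i \<in> \<real>" for i by (simp add: p_def coeff_sum)
    moreover have "poly p (of_real s) = of_real (g s)" for s by (simp add: p_def a poly_sum poly_monom)
    ultimately show ?thesis
      using g(2) by (intro exI[of _ p]) (simp flip: of_real_diff add: abs_minus_commute)
  qed
  then have "\<forall>n. \<exists>p. (\<forall>i. coeff p i \<in> \<real>) \<and>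
      (\<forall>s\<in>S. cmod (poly p (of_real s) - of_real (f s)) < 1 / Suc n)" ..
  from choice[OF this] obtain P where "\<forall>n. (\<forall>i. coeff (P n) i \<in> \<real>) \<and>
      (\<forall>s\<in>S. cmod (poly (P n) (of_real s) - of_real (f s)) < 1 / Suc n)" ..
  then show thesis using that by blast
qed

lemma convergent_peval_if_uniform_approx:
  fixes x :: "'a::cstar_algebra"
  assumes x: "x \<in> sa" and real: "\<And>n i. coeff (P n) i \<in> \<real>"
    and approx: "\<And>n z. z \<in> cspectrum x \<Longrightarrow> cmod (poly (P n) z - h z) \<le> 1 / Suc n"
  shows "convergent (\<lambda>n. peval (P n) x)"
proof -
  have bound: "norm (peval (P n) x - peval (P m) x) \<le> 1 / Suc n + 1 / Suc m" for n m
    unfolding peval_diff[symmetric]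
  proof (rule norm_peval_le[OF x])
    show "coeff (P n - P m) i \<in> \<real>" for i using real by simp
    show "cmod (poly (P n - P m) z) \<le> 1 / Suc n + 1 / Suc m" if "z \<in> cspectrum x" for z
      using approx[OF that, of n] approx[OF that, of m]
        norm_triangle_ineq4[of "poly (P n) z - h z" "poly (P m) z - h z"]
      by simp
  qed simp
  have "Cauchy (\<lambda>n. peval (P n) x)"
  proof (rule metric_CauchyI)
    fix e :: real assume e: "e > 0"
    obtain K where K: "2 / e < real K" using reals_Archimedean2 by blast
    then have K0: "real K > 0" using e by (smt (verit) divide_pos_pos)
    have "dist (peval (P m) x) (peval (P n) x) < e" if "m \<ge> K" "n \<ge> K" for m n
    proof -
      have "1 / real (Suc m) \<le> 1 / real K" "1 / real (Suc n) \<le> 1 / real K"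
        using that K0 by (simp_all add: frac_le)
      moreover have "2 / real K < e" using K e K0 by (simp add: field_simps)
      ultimately show ?thesis using bound[of m n] by (simp add: dist_norm)
    qed
    then show "\<exists>M. \<forall>m\<ge>M. \<forall>n\<ge>M. dist (peval (P m) x) (peval (P n) x) < e" by blast
  qed
  then show ?thesis by (simp add: Cauchy_convergent_iff)
qed

text \<open>The limit of the \<open>peval (P n) x\<close> is killed by \<open>\<pi>\<close>, hence is zero by injectivity.\<close>
lemma vanishing_on_cspectrum_hom:
  fixes \<pi> :: "'a::cstar_algebra \<Rightarrow> 'b::cstar_algebra"
  assumes \<pi>: "unital_star_mono \<pi>" and x: "x \<in> sa" and real: "\<And>n i. coeff (P n) i \<in> \<real>"
    and approx: "\<And>n z. z \<in> cspectrum x \<union> cspectrum (\<pi> x) \<Longrightarrow> cmod (poly (P n) z - h z) \<le> 1 / Suc n"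
    and vanish: "\<And>z. z \<in> cspectrum (\<pi> x) \<Longrightarrow> h z = 0"
    and c: "c \<in> cspectrum x"
  shows "h c = 0"
proof -
  define u where "u n = peval (P n) x" for n
  have "convergent u"
    unfolding u_def using approx by (intro convergent_peval_if_uniform_approx[OF x real]) auto
  then obtain L where L: "u \<longlonglongrightarrow> L" unfolding convergent_def by blast
  have "(\<lambda>n. \<pi> (u n)) \<longlonglongrightarrow> \<pi> L"
    by (rule hom_tendsto_sa[OF \<pi> _ L]) (simp add: u_def peval_sa[OF real x])
  moreover have "(\<lambda>n. \<pi> (u n)) \<longlonglongrightarrow> 0"
  proof (rule Lim_null_comparison[OF always_eventually LIMSEQ_inverse_real_of_nat])
    have "norm (peval (P n) (\<pi> x)) \<le> inverse (Suc n)" for n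
    proof (rule norm_peval_le[OF hom_sa[OF \<pi> x] real])
      fix z assume z: "z \<in> cspectrum (\<pi> x)"
      then show "cmod (poly (P n) z) \<le> inverse (Suc n)"
        using approx[of z n] vanish[OF z] by (simp add: inverse_eq_divide)
    qed simp
    then show "\<forall>n. norm (\<pi> (u n)) \<le> inverse (real (Suc n))" by (simp add: u_def hom_peval[OF \<pi>])
  qed
  ultimately have "\<pi> L = \<pi> 0" unfolding hom_zero[OF \<pi>] by (rule LIMSEQ_unique)
  then have "L = 0" by (rule injD[OF hom_inj[OF \<pi>]])
  have "(\<lambda>n. poly (P n) c) \<longlonglongrightarrow> 0"
  proof (rule Lim_null_comparison)
    show "\<forall>\<^sub>F n in sequentially. norm (poly (P n) c) \<le> norm (u n)"
      using cmod_poly_le_norm_peval[OF c] by (simp add: u_def)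
    show "(\<lambda>n. norm (u n)) \<longlonglongrightarrow> 0" using L \<open>L = 0\<close> by (simp add: tendsto_norm_zero_iff)
  qed
  moreover have "(\<lambda>n. poly (P n) c) \<longlonglongrightarrow> h c"
  proof (rule Lim_null_comparison[THEN LIM_zero_cancel])
    show "\<forall>\<^sub>F n in sequentially. norm (poly (P n) c - h c) \<le> inverse (Suc n)"
      using approx c by (simp add: inverse_eq_divide)
    show "(\<lambda>n. inverse (real (Suc n))) \<longlonglongrightarrow> 0" by (rule LIMSEQ_inverse_real_of_nat)
  qed
  ultimately have "0 = h c" by (rule LIMSEQ_unique)
  then show ?thesis by simp
qed

text \<open>A tent function peaked at a point of the spectrum of \<open>x\<close> that is missing from the
  spectrum of \<open>\<pi> x\<close> would contradict \<open>vanishing_on_cspectrum_hom\<close>.\<close>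
lemma cspectrum_subset_hom:
  assumes \<pi>: "unital_star_mono \<pi>" and x: "x \<in> sa"
  shows "cspectrum x \<subseteq> cspectrum (\<pi> x)"
proof
  fix c assume c: "c \<in> cspectrum x"
  show "c \<in> cspectrum (\<pi> x)"
  proof (rule ccontr)
    assume "c \<notin> cspectrum (\<pi> x)"
    then obtain \<epsilon> where \<epsilon>: "\<epsilon> > 0" "\<And>z. dist z c < \<epsilon> \<Longrightarrow> z \<notin> cspectrum (\<pi> x)"
      using closed_cspectrum[of "\<pi> x"] unfolding closed_def open_dist by blast
    define f where "f s = max 0 (1 - \<bar>s - Re c\<bar> / \<epsilon>)" for s
    define M where "M = norm x + norm (\<pi> x)"
    have "continuous_on {-M..M} f" unfolding f_def using \<epsilon>(1) by (intro continuous_intros) simp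
    then obtain P where real: "\<And>n i. coeff (P n) i \<in> \<real>"
      and P: "\<And>n s. s \<in> {-M..M} \<Longrightarrow> cmod (poly (P n) (of_real s) - of_real (f s)) < 1 / Suc n"
      using real_polynomial_approximation[of "{-M..M}" f] by blast
    have spectra: "z \<in> \<real> \<and> Re z \<in> {-M..M}" if "z \<in> cspectrum x \<union> cspectrum (\<pi> x)" for z
    proof -
      have "z \<in> \<real>" using that cspectrum_sa_real[OF x] cspectrum_sa_real[OF hom_sa[OF \<pi> x]] by blast
      moreover have "cmod z \<le> norm x \<or> cmod z \<le> norm (\<pi> x)"
        using that cspectrum_norm_le[of z x] cspectrum_norm_le[of z "\<pi> x"] by blast
      then have "cmod z \<le> M" unfolding M_def using norm_ge_zero[of x] norm_ge_zero[of "\<pi> x"] by linarith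
      ultimately show ?thesis using abs_Re_le_cmod[of z] by auto
    qed
    have "(\<lambda>z. complex_of_real (f (Re z))) c = 0"
    proof (rule vanishing_on_cspectrum_hom[OF \<pi> x real _ _ c])
      show "cmod (poly (P n) z - complex_of_real (f (Re z))) \<le> 1 / Suc n"
        if "z \<in> cspectrum x \<union> cspectrum (\<pi> x)" for n z
        using P[of "Re z" n] spectra[OF that] by simp
      show "complex_of_real (f (Re z)) = 0" if z: "z \<in> cspectrum (\<pi> x)" for z
      proof -
        have "z \<in> \<real>" "c \<in> \<real>" using spectra z c by blast+
        then have "z - c = of_real (Re z - Re c)" by simp
        then have "dist z c = \<bar>Re z - Re c\<bar>" by (simp only: dist_norm norm_of_real)
        then have "\<epsilon> \<le> \<bar>Re z - Re c\<bar>" using \<epsilon>(2) z by force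
        then show ?thesis using \<epsilon>(1) by (simp add: f_def)
      qed
    qed
    then show False by (simp add: f_def)
  qed
qed

lemma sa_le_hom_iff:
  assumes \<pi>: "unital_star_mono \<pi>" and x: "x \<in> sa" and y: "y \<in> sa"
  shows "sa_le (\<pi> x) (\<pi> y) \<longleftrightarrow> sa_le x y"
proof -
  have d: "y - x \<in> sa" using x y by (rule sa_diff[rotated])
  have "cspectrum (\<pi> (y - x)) = cspectrum (y - x)"
    using cspectrum_hom_subset[OF \<pi>] cspectrum_subset_hom[OF \<pi> d] by blast
  then show ?thesis
    using hom_sa[OF \<pi> d] d by (simp add: sa_le_def cpositive_def hom_diff[OF \<pi>])
qed

lemma is_sup_sa_le_iff: "is_sup_sa D s \<Longrightarrow> u \<in> sa \<Longrightarrow> sa_le s u \<longleftrightarrow> (\<forall>d\<in>D. sa_le d u)"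
  unfolding is_sup_sa_def using sa_le_trans[of _ s u] by blast

lemma is_inf_sa_ge_iff: "is_inf_sa D s \<Longrightarrow> u \<in> sa \<Longrightarrow> sa_le u s \<longleftrightarrow> (\<forall>d\<in>D. sa_le u d)"
  unfolding is_inf_sa_def using sa_le_trans[of u s] by blast

lemma up_directed_bdd_image:
  assumes D: "up_directed_bdd D" and sa: "f ` D \<subseteq> sa"
    and mono: "\<And>x y. x \<in> D \<Longrightarrow> y \<in> D \<Longrightarrow> sa_le x y \<Longrightarrow> sa_le (f x) (f y)"
    and bound: "u \<in> sa" "\<And>x. x \<in> D \<Longrightarrow> sa_le (f x) u"
  shows "up_directed_bdd (f ` D)"
  unfolding up_directed_bdd_def
proof (intro conjI sa)
  show "f ` D \<noteq> {}" using D by (simp add: up_directed_bdd_def)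
  show "\<forall>x\<in>f ` D. \<forall>y\<in>f ` D. \<exists>z\<in>f ` D. sa_le x z \<and> sa_le y z"
    using D mono unfolding up_directed_bdd_def by (simp add: subset_iff) blast
  show "\<exists>u\<in>sa. \<forall>x\<in>f ` D. sa_le x u" using bound by blast
qed

lemma down_directed_bdd_image:
  assumes D: "down_directed_bdd D" and sa: "f ` D \<subseteq> sa"
    and mono: "\<And>x y. x \<in> D \<Longrightarrow> y \<in> D \<Longrightarrow> sa_le x y \<Longrightarrow> sa_le (f x) (f y)"
    and bound: "u \<in> sa" "\<And>x. x \<in> D \<Longrightarrow> sa_le u (f x)"
  shows "down_directed_bdd (f ` D)"
  unfolding down_directed_bdd_def
proof (intro conjI sa)
  show "f ` D \<noteq> {}" using D by (simp add: down_directed_bdd_def)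
  show "\<forall>x\<in>f ` D. \<forall>y\<in>f ` D. \<exists>z\<in>f ` D. sa_le z x \<and> sa_le z y"
    using D mono unfolding down_directed_bdd_def by (simp add: subset_iff) blast
  show "\<exists>u\<in>sa. \<forall>x\<in>f ` D. sa_le u x" using bound by blast
qed

lemma up_directed_bdd_uminus:
  fixes D :: "'a::cstar_algebra set"
  assumes D: "down_directed_bdd D"
  shows "up_directed_bdd (uminus ` D)"
  unfolding up_directed_bdd_def
proof (intro conjI)
  show "uminus ` D \<subseteq> sa" "uminus ` D \<noteq> {}" using D by (auto simp: down_directed_bdd_def sa_minus)
  show "\<forall>x\<in>uminus ` D. \<forall>y\<in>uminus ` D. \<exists>z\<in>uminus ` D. sa_le x z \<and> sa_le y z"
    using D unfolding down_directed_bdd_def by (simp add: sa_le_minus_iff)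
  obtain u where "u \<in> sa" "\<forall>x\<in>D. sa_le u x" using D by (auto simp: down_directed_bdd_def)
  then show "\<exists>u\<in>sa. \<forall>x\<in>uminus ` D. sa_le x u"
    by (intro bexI[of _ "- u"]) (auto simp: sa_le_minus_iff sa_minus)
qed

lemma is_inf_sa_uminus:
  fixes D :: "'a::cstar_algebra set"
  assumes t: "is_sup_sa (uminus ` D) t"
  shows "is_inf_sa D (- t)"
  unfolding is_inf_sa_def
proof (intro conjI ballI impI)
  show "- t \<in> sa" using t by (simp add: is_sup_sa_def sa_minus)
  show "sa_le (- t) x" if "x \<in> D" for x
  proof (rule sa_le_minus_swap_left)
    show "sa_le (- x) t" using t that by (simp add: is_sup_sa_def)
  qed
  show "sa_le u (- t)" if "u \<in> sa" "\<forall>x\<in>D. sa_le u x" for u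
  proof (rule sa_le_minus_swap_right)
    show "sa_le t (- u)" using t that by (auto simp: is_sup_sa_def sa_minus sa_le_minus_iff)
  qed
qed

lemma monotone_complete_Inf:
  fixes D :: "'a::cstar_algebra set"
  assumes "monotone_complete TYPE('a)" and "down_directed_bdd D"
  shows "\<exists>s. is_inf_sa D s"
proof -
  have "up_directed_bdd (uminus ` D)" using assms(2) by (rule up_directed_bdd_uminus)
  then obtain t where "is_sup_sa (uminus ` D) t" using assms(1) unfolding monotone_complete_def by blast
  then show ?thesis by (blast intro: is_inf_sa_uminus)
qed

lemma regular_completion_hom: "regular_monotone_completion i \<Longrightarrow> unital_star_mono i"
  by (simp add: regular_monotone_completion_def)

lemma regular_completion_sa: "regular_monotone_completion i \<Longrightarrow> a \<in> sa \<Longrightarrow> i a \<in> sa"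
  by (rule hom_sa[OF regular_completion_hom])

lemma regular_completion_le_iff:
  "regular_monotone_completion i \<Longrightarrow> a \<in> sa \<Longrightarrow> b \<in> sa \<Longrightarrow> sa_le (i a) (i b) \<longleftrightarrow> sa_le a b"
  by (rule sa_le_hom_iff[OF regular_completion_hom])

lemma regular_completion_le_iff_lower:
  assumes i: "regular_monotone_completion (i::'a::cstar_algebra \<Rightarrow> 'b::cstar_algebra)"
    and q: "q1 \<in> sa" "q2 \<in> sa"
  shows "sa_le q1 q2 \<longleftrightarrow> (\<forall>a\<in>sa. sa_le (i a) q1 \<longrightarrow> sa_le (i a) q2)"
proof -
  have "is_sup_sa {i a | a. a \<in> sa \<and> sa_le (i a) q1} q1"
    using i q(1) by (simp add: regular_monotone_completion_def)
  then show ?thesis using is_sup_sa_le_iff[OF _ q(2)] by blast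
qed

lemma regular_completion_le_iff_upper:
  assumes i: "regular_monotone_completion (i::'a::cstar_algebra \<Rightarrow> 'b::cstar_algebra)"
    and q: "q1 \<in> sa" "q2 \<in> sa"
  shows "sa_le q1 q2 \<longleftrightarrow> (\<forall>a\<in>sa. sa_le q2 (i a) \<longrightarrow> sa_le q1 (i a))"
proof
  show "sa_le q1 q2 \<Longrightarrow> \<forall>a\<in>sa. sa_le q2 (i a) \<longrightarrow> sa_le q1 (i a)" using sa_le_trans by blast
next
  have hom: "unital_star_mono i" by (rule regular_completion_hom[OF i])
  assume above: "\<forall>a\<in>sa. sa_le q2 (i a) \<longrightarrow> sa_le q1 (i a)"
  have "sa_le (i a) (- q1)" if a: "a \<in> sa" and "sa_le (i a) (- q2)" for a
  proof (rule sa_le_minus_swap_right)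
    have "sa_le q2 (i (- a))" using \<open>sa_le (i a) (- q2)\<close> by (simp add: hom_minus[OF hom] sa_le_minus_swap_right)
    then have "sa_le q1 (i (- a))" using above sa_minus[OF a] by blast
    then show "sa_le q1 (- i a)" by (simp add: hom_minus[OF hom])
  qed
  then have "sa_le (- q2) (- q1)"
    using q by (simp add: regular_completion_le_iff_lower[OF i] sa_minus)
  then show "sa_le q1 q2" by (simp add: sa_le_minus_iff)
qed

lemma regular_completion_bounded:
  assumes i: "regular_monotone_completion (i::'a::cstar_algebra \<Rightarrow> 'b::cstar_algebra)" and u: "u \<in> sa"
  shows "\<exists>a\<in>sa. sa_le u (i a)" and "\<exists>a\<in>sa. sa_le (i a) u"
proof -
  have hom: "unital_star_mono i" by (rule regular_completion_hom[OF i])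
  have i_norm: "i (scaleR r 1) = scaleR r 1" for r by (simp add: hom_scaleR[OF hom] hom_one[OF hom])
  show "\<exists>a\<in>sa. sa_le u (i a)"
  proof
    show "sa_le u (i (scaleR (norm u) 1))" using sa_le_scaleR_norm[OF u] by (simp add: i_norm)
  qed (rule sa_scaleR[OF sa_one])
  show "\<exists>a\<in>sa. sa_le (i a) u"
  proof
    have "sa_le (- u) (scaleR (norm u) 1)" using sa_le_scaleR_norm[OF sa_minus[OF u]] by simp
    then show "sa_le (i (- scaleR (norm u) 1)) u"
      by (simp add: i_norm hom_minus[OF hom] sa_le_minus_swap_left)
  qed (rule sa_minus[OF sa_scaleR[OF sa_one]])
qed

section \<open>Extending an order isomorphism to the completions\<close>

lemma order_iso_sa_bij: "order_iso_sa \<Phi> \<Longrightarrow> bij_betw \<Phi> sa sa"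
  unfolding order_iso_sa_def by (rule conjunct1)

lemma order_iso_sa_sa: "order_iso_sa \<Phi> \<Longrightarrow> x \<in> sa \<Longrightarrow> \<Phi> x \<in> sa"
  by (rule bij_betw_apply[OF order_iso_sa_bij])

lemma order_iso_sa_le_iff:
  assumes "order_iso_sa \<Phi>" "x \<in> sa" "y \<in> sa"
  shows "sa_le (\<Phi> x) (\<Phi> y) \<longleftrightarrow> sa_le x y"
proof -
  have "\<forall>x\<in>sa. \<forall>y\<in>sa. sa_le x y \<longleftrightarrow> sa_le (\<Phi> x) (\<Phi> y)"
    using assms(1) unfolding order_iso_sa_def by (rule conjunct2)
  from this[rule_format, OF assms(2,3)] show ?thesis by (rule sym)
qed

lemma order_iso_sa_ball:
  assumes \<Phi>: "order_iso_sa \<Phi>"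
  shows "(\<forall>b\<in>sa. P b) \<longleftrightarrow> (\<forall>a\<in>sa. P (\<Phi> a))"
proof
  show "\<forall>b\<in>sa. P b \<Longrightarrow> \<forall>a\<in>sa. P (\<Phi> a)" using order_iso_sa_sa[OF \<Phi>] by blast
  assume P: "\<forall>a\<in>sa. P (\<Phi> a)"
  have surj: "\<Phi> ` sa = sa" by (rule bij_betw_imp_surj_on[OF order_iso_sa_bij[OF \<Phi>]])
  have "\<forall>b\<in>\<Phi> ` sa. P b" using P by blast
  then show "\<forall>b\<in>sa. P b" by (simp only: surj)
qed

lemma order_iso_sa_inv_into:
  assumes \<Phi>: "order_iso_sa (\<Phi>::'a::cstar_algebra \<Rightarrow> 'b::cstar_algebra)"
  shows "order_iso_sa (inv_into sa \<Phi>)"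
  unfolding order_iso_sa_def
proof (intro conjI ballI)
  have bij: "bij_betw \<Phi> sa sa" by (rule order_iso_sa_bij[OF \<Phi>])
  then show "bij_betw (inv_into sa \<Phi>) sa sa" by (rule bij_betw_inv_into)
  fix x y :: 'b assume "x \<in> sa" "y \<in> sa"
  then show "sa_le x y \<longleftrightarrow> sa_le (inv_into sa \<Phi> x) (inv_into sa \<Phi> y)"
    using order_iso_sa_le_iff[OF \<Phi>, of "inv_into sa \<Phi> x" "inv_into sa \<Phi> y"] bij
    by (simp add: bij_betw_inv_into_right bij_betw_apply[OF bij_betw_inv_into])
qed

locale order_iso_completions =
  fixes iA :: "'a::cstar_algebra \<Rightarrow> 'abar::cstar_algebra"
    and iB :: "'b::cstar_algebra \<Rightarrow> 'bbar::cstar_algebra"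
    and \<Phi> :: "'a \<Rightarrow> 'b"
  assumes A: "regular_monotone_completion iA"
    and B: "regular_monotone_completion iB"
    and \<Phi>: "order_iso_sa \<Phi>"
begin

definition corresponds :: "'abar \<Rightarrow> 'bbar \<Rightarrow> bool" where
  "corresponds q q' \<longleftrightarrow> q \<in> sa \<and> q' \<in> sa \<and> (\<forall>a\<in>sa. sa_le (iA a) q \<longleftrightarrow> sa_le (iB (\<Phi> a)) q')"

lemma corresponds_embedding: "a \<in> sa \<Longrightarrow> corresponds (iA a) (iB (\<Phi> a))"
  by (simp add: corresponds_def regular_completion_sa[OF A] regular_completion_sa[OF B]
      regular_completion_le_iff[OF A] regular_completion_le_iff[OF B]
      order_iso_sa_sa[OF \<Phi>] order_iso_sa_le_iff[OF \<Phi>])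

lemma corresponds_le_iff:
  assumes 1: "corresponds q1 q1'" and 2: "corresponds q2 q2'"
  shows "sa_le q1 q2 \<longleftrightarrow> sa_le q1' q2'"
proof -
  have sa: "q1 \<in> sa" "q2 \<in> sa" "q1' \<in> sa" "q2' \<in> sa" using 1 2 by (simp_all add: corresponds_def)
  have "sa_le q1 q2 \<longleftrightarrow> (\<forall>a\<in>sa. sa_le (iA a) q1 \<longrightarrow> sa_le (iA a) q2)"
    by (rule regular_completion_le_iff_lower[OF A sa(1,2)])
  also have "\<dots> \<longleftrightarrow> (\<forall>a\<in>sa. sa_le (iB (\<Phi> a)) q1' \<longrightarrow> sa_le (iB (\<Phi> a)) q2')"
    using 1 2 by (simp add: corresponds_def)
  also have "\<dots> \<longleftrightarrow> (\<forall>b\<in>sa. sa_le (iB b) q1' \<longrightarrow> sa_le (iB b) q2')"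
    by (rule order_iso_sa_ball[OF \<Phi>, symmetric])
  also have "\<dots> \<longleftrightarrow> sa_le q1' q2'"
    by (rule regular_completion_le_iff_lower[OF B sa(3,4), symmetric])
  finally show ?thesis .
qed

lemma corresponds_eq_iff: "corresponds q1 q1' \<Longrightarrow> corresponds q2 q2' \<Longrightarrow> q1 = q2 \<longleftrightarrow> q1' = q2'"
  by (metis corresponds_le_iff sa_le_antisym sa_le_refl)

lemma corresponds_if_upper:
  assumes q: "q \<in> sa" "q' \<in> sa"
    and upper: "\<And>u. u \<in> sa \<Longrightarrow> sa_le q (iA u) \<longleftrightarrow> sa_le q' (iB (\<Phi> u))"
  shows "corresponds q q'"
  unfolding corresponds_def
proof (intro conjI q ballI)
  fix a :: 'a assume a: "a \<in> sa"
  have "sa_le (iA a) q \<longleftrightarrow> (\<forall>u\<in>sa. sa_le q (iA u) \<longrightarrow> sa_le (iA a) (iA u))"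
    by (rule regular_completion_le_iff_upper[OF A regular_completion_sa[OF A a] q(1)])
  also have "\<dots> \<longleftrightarrow> (\<forall>u\<in>sa. sa_le q' (iB (\<Phi> u)) \<longrightarrow> sa_le (iB (\<Phi> a)) (iB (\<Phi> u)))"
    using a by (simp add: upper corresponds_le_iff[OF corresponds_embedding corresponds_embedding])
  also have "\<dots> \<longleftrightarrow> (\<forall>b\<in>sa. sa_le q' (iB b) \<longrightarrow> sa_le (iB (\<Phi> a)) (iB b))"
    by (rule order_iso_sa_ball[OF \<Phi>, symmetric])
  also have "\<dots> \<longleftrightarrow> sa_le (iB (\<Phi> a)) q'"
    using a by (intro regular_completion_le_iff_upper[OF B _ q(2), symmetric])
      (simp add: regular_completion_sa[OF B] order_iso_sa_sa[OF \<Phi>])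
  finally show "sa_le (iA a) q \<longleftrightarrow> sa_le (iB (\<Phi> a)) q'" .
qed

lemma corresponds_Sup:
  assumes D: "up_directed_bdd D" and s: "is_sup_sa D s"
    and F: "\<And>d. d \<in> D \<Longrightarrow> corresponds d (F d)"
  shows "\<exists>s'. corresponds s s'"
proof -
  obtain w where w: "w \<in> sa" "\<forall>d\<in>D. sa_le d w" using D by (auto simp: up_directed_bdd_def)
  obtain a0 where a0: "a0 \<in> sa" "sa_le w (iA a0)" using regular_completion_bounded(1)[OF A w(1)] by blast
  have "up_directed_bdd (F ` D)"
  proof (rule up_directed_bdd_image[OF D])
    show "F ` D \<subseteq> sa" using F by (auto simp: corresponds_def)
    show "sa_le (F x) (F y)" if "x \<in> D" "y \<in> D" "sa_le x y" for x y
      using corresponds_le_iff[OF F F] that by blast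
    show "iB (\<Phi> a0) \<in> sa" by (simp add: a0 regular_completion_sa[OF B] order_iso_sa_sa[OF \<Phi>])
    show "sa_le (F d) (iB (\<Phi> a0))" if "d \<in> D" for d
      using corresponds_le_iff[OF F[OF that] corresponds_embedding[OF a0(1)]]
        sa_le_trans[OF _ a0(2), of d] w that by blast
  qed
  then obtain s' where s': "is_sup_sa (F ` D) s'"
    using B by (auto simp: regular_monotone_completion_def monotone_complete_def)
  have "corresponds s s'"
  proof (rule corresponds_if_upper)
    show "s \<in> sa" "s' \<in> sa" using s s' by (simp_all add: is_sup_sa_def)
    fix u :: 'a assume u: "u \<in> sa"
    have "sa_le s (iA u) \<longleftrightarrow> (\<forall>d\<in>D. sa_le d (iA u))"
      by (rule is_sup_sa_le_iff[OF s regular_completion_sa[OF A u]])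
    also have "\<dots> \<longleftrightarrow> (\<forall>d\<in>D. sa_le (F d) (iB (\<Phi> u)))"
      using corresponds_le_iff[OF F corresponds_embedding[OF u]] by blast
    also have "\<dots> \<longleftrightarrow> sa_le s' (iB (\<Phi> u))"
      using is_sup_sa_le_iff[OF s'] u by (simp add: regular_completion_sa[OF B] order_iso_sa_sa[OF \<Phi>])
    finally show "sa_le s (iA u) \<longleftrightarrow> sa_le s' (iB (\<Phi> u))" .
  qed
  then show ?thesis ..
qed

lemma corresponds_Inf:
  assumes D: "down_directed_bdd D" and s: "is_inf_sa D s"
    and F: "\<And>d. d \<in> D \<Longrightarrow> corresponds d (F d)"
  shows "\<exists>s'. corresponds s s'"
proof -
  obtain w where w: "w \<in> sa" "\<forall>d\<in>D. sa_le w d" using D by (auto simp: down_directed_bdd_def)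
  obtain a0 where a0: "a0 \<in> sa" "sa_le (iA a0) w" using regular_completion_bounded(2)[OF A w(1)] by blast
  have "down_directed_bdd (F ` D)"
  proof (rule down_directed_bdd_image[OF D])
    show "F ` D \<subseteq> sa" using F by (auto simp: corresponds_def)
    show "sa_le (F x) (F y)" if "x \<in> D" "y \<in> D" "sa_le x y" for x y
      using corresponds_le_iff[OF F F] that by blast
    show "iB (\<Phi> a0) \<in> sa" by (simp add: a0 regular_completion_sa[OF B] order_iso_sa_sa[OF \<Phi>])
    show "sa_le (iB (\<Phi> a0)) (F d)" if "d \<in> D" for d
      using corresponds_le_iff[OF corresponds_embedding[OF a0(1)] F[OF that]]
        sa_le_trans[OF a0(2), of d] w that by blast
  qed
  moreover have "monotone_complete TYPE('bbar)" using B by (simp add: regular_monotone_completion_def)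
  ultimately obtain s' where s': "is_inf_sa (F ` D) s'" using monotone_complete_Inf by blast
  have "corresponds s s'"
    unfolding corresponds_def
  proof (intro conjI ballI)
    show "s \<in> sa" "s' \<in> sa" using s s' by (simp_all add: is_inf_sa_def)
    fix a :: 'a assume a: "a \<in> sa"
    have "sa_le (iA a) s \<longleftrightarrow> (\<forall>d\<in>D. sa_le (iA a) d)"
      by (rule is_inf_sa_ge_iff[OF s regular_completion_sa[OF A a]])
    also have "\<dots> \<longleftrightarrow> (\<forall>d\<in>D. sa_le (iB (\<Phi> a)) (F d))"
      using corresponds_le_iff[OF corresponds_embedding[OF a] F] by blast
    also have "\<dots> \<longleftrightarrow> sa_le (iB (\<Phi> a)) s'"
      using is_inf_sa_ge_iff[OF s'] a by (simp add: regular_completion_sa[OF B] order_iso_sa_sa[OF \<Phi>])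
    finally show "sa_le (iA a) s \<longleftrightarrow> sa_le (iB (\<Phi> a)) s'" .
  qed
  then show ?thesis ..
qed

text \<open>The elements that have a correspondent contain the embedded ones and are monotone
  closed, so they exhaust the completion, which is the monotone closure of the embedded part.\<close>
lemma corresponds_exists:
  assumes q: "q \<in> sa"
  shows "\<exists>q'. corresponds q q'"
proof -
  define T where "T = {q. \<exists>q'. corresponds q q'}"
  have "monotone_closed T"
    unfolding monotone_closed_def
  proof (intro conjI allI impI)
    show "T \<subseteq> sa" by (auto simp: T_def corresponds_def)
    fix D s assume "D \<subseteq> T"
    then have "\<forall>d\<in>D. \<exists>q'. corresponds d q'" by (auto simp: T_def)
    from bchoice[OF this] obtain F where F: "\<forall>d\<in>D. corresponds d (F d)" ..
    show "s \<in> T" if "up_directed_bdd D \<and> is_sup_sa D s"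
      using corresponds_Sup[of D s F] F that by (simp add: T_def)
    show "s \<in> T" if "down_directed_bdd D \<and> is_inf_sa D s"
      using corresponds_Inf[of D s F] F that by (simp add: T_def)
  qed
  moreover have "iA ` sa \<subseteq> T" using corresponds_embedding by (auto simp: T_def)
  ultimately have "monotone_closure (iA ` sa) \<subseteq> T" by (auto simp: monotone_closure_def)
  then show ?thesis using A q by (auto simp: regular_monotone_completion_def T_def)
qed

definition extension :: "'abar \<Rightarrow> 'bbar" where
  "extension q = (SOME q'. corresponds q q')"

lemma corresponds_extension: "q \<in> sa \<Longrightarrow> corresponds q (extension q)"
  unfolding extension_def using corresponds_exists by (rule someI_ex)

lemma extension_eqI: "corresponds q q' \<Longrightarrow> extension q = q'"
  using corresponds_eq_iff corresponds_extension by (metis corresponds_def)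

lemma extension_embedding: "a \<in> sa \<Longrightarrow> extension (iA a) = iB (\<Phi> a)"
  by (rule extension_eqI[OF corresponds_embedding])

lemma extension_unique:
  assumes \<Psi>: "order_iso_sa \<Psi>" and ext: "\<forall>a\<in>sa. \<Psi> (iA a) = iB (\<Phi> a)" and x: "x \<in> sa"
  shows "\<Psi> x = extension x"
proof -
  have "corresponds x (\<Psi> x)"
    unfolding corresponds_def
  proof (intro conjI ballI x order_iso_sa_sa[OF \<Psi> x])
    fix a :: 'a assume "a \<in> sa"
    then show "sa_le (iA a) x \<longleftrightarrow> sa_le (iB (\<Phi> a)) (\<Psi> x)"
      using order_iso_sa_le_iff[OF \<Psi> _ x] ext regular_completion_sa[OF A] by metis
  qed
  then show ?thesis by (rule extension_eqI[symmetric])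
qed

lemma extension_surj: "extension ` sa = sa"
proof
  show "extension ` sa \<subseteq> sa" using corresponds_extension by (auto simp: corresponds_def)
  show "sa \<subseteq> extension ` sa"
  proof
    fix q' :: 'bbar assume q': "q' \<in> sa"
    interpret inv: order_iso_completions iB iA "inv_into sa \<Phi>"
      using B A order_iso_sa_inv_into[OF \<Phi>] by unfold_locales
    obtain q where q: "inv.corresponds q' q" using inv.corresponds_exists[OF q'] by blast
    have "corresponds q q'"
      unfolding corresponds_def
    proof (intro conjI ballI)
      show "q \<in> sa" "q' \<in> sa" using q by (simp_all add: inv.corresponds_def)
      fix a :: 'a assume a: "a \<in> sa"
      have "inv_into sa \<Phi> (\<Phi> a) = a"
        using a bij_betw_imp_inj_on[OF order_iso_sa_bij[OF \<Phi>]] by (rule inv_into_f_f[rotated])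
      then show "sa_le (iA a) q \<longleftrightarrow> sa_le (iB (\<Phi> a)) q'"
        using q order_iso_sa_sa[OF \<Phi> a] by (auto simp: inv.corresponds_def)
    qed
    then show "q' \<in> extension ` sa" using extension_eqI by (auto simp: corresponds_def)
  qed
qed

lemma order_iso_extension: "order_iso_sa extension"
proof -
  have le: "sa_le (extension x) (extension y) \<longleftrightarrow> sa_le x y" if "x \<in> sa" "y \<in> sa" for x y
    using corresponds_le_iff[OF corresponds_extension corresponds_extension] that by blast
  have "inj_on extension sa"
  proof (rule inj_onI)
    fix x y assume "x \<in> sa" "y \<in> sa" "extension x = extension y"
    then have "sa_le x y" "sa_le y x" using le[of x y] le[of y x] by (simp_all add: sa_le_refl)
    then show "x = y" by (rule sa_le_antisym)
  qed
  then show ?thesis using extension_surj le unfolding order_iso_sa_def bij_betw_def by auto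
qed

end

theorem theorem3p5:
  fixes iA :: "'a::cstar_algebra \<Rightarrow> 'abar::cstar_algebra"
    and iB :: "'b::cstar_algebra \<Rightarrow> 'bbar::cstar_algebra"
    and \<Phi> :: "'a \<Rightarrow> 'b"
  assumes "regular_monotone_completion iA"
    and "regular_monotone_completion iB"
    and "order_iso_sa \<Phi>"
  shows "\<exists>\<Psi>::'abar \<Rightarrow> 'bbar. order_iso_sa \<Psi> \<and> (\<forall>a\<in>sa. \<Psi> (iA a) = iB (\<Phi> a)) \<and>
           (\<forall>\<Psi>'::'abar \<Rightarrow> 'bbar. order_iso_sa \<Psi>' \<and> (\<forall>a\<in>sa. \<Psi>' (iA a) = iB (\<Phi> a))
              \<longrightarrow> (\<forall>x\<in>sa. \<Psi>' x = \<Psi> x))"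
proof -
  interpret order_iso_completions iA iB \<Phi> using assms by unfold_locales
  show ?thesis
    using order_iso_extension extension_embedding extension_unique by blast
qed

end
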